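(* Let $n\ge2$, let $A$ be a Hermitian matrix of order $n$ and $\mathcal{O}\in\mathcal{C}_{sg}^{(n)}$. Suppose that $\mathcal{O}\stackrel{\mathsf{p}}{\sim}\mathcal{O}'\stackrel{\mathsf{w}}{\sim}\mathcal{O}''$ or $\mathcal{O}\stackrel{\mathsf{w}}{\sim}\mathcal{O}'\stackrel{\mathsf{p}}{\sim}\mathcal{O}''$ with $\mathcal{O}''\in\mathcal{C}_{sp}^{(n)}$, and that the weak equivalence relation is given by a chain in canonical form containing $d$ shift equivalences. Let $A'$ be obtained from $A$ by applying $d+1$ cycles of the cyclic complex Jacobi method defined by the strategy $I_{\mathcal{O}}$. If all rotation angles satisfy $\phi_k\in[-\pi/4,\pi/4]$, $k\ge0$, then there is a constant $\gamma_n$ depending only on $n$ such that $S^2(A')\le\gamma_nS^2(A)$, $0\le\gamma_n<1$.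
   Context: $\imath=\sqrt{-1}$. For $1\le i<j\le n$ and real $\phi,\alpha$, $R(i,j,\phi,\alpha)$ is the $n\times n$ matrix equal to $I_n$ except for entries $(i,i)=(j,j)=\cos\phi$, $(i,j)=-e^{\imath\alpha}\sin\phi$, $(j,i)=e^{-\imath\alpha}\sin\phi$. $S(X)=\|X-\mathrm{diag}(X)\|_F$. The complex Jacobi method on Hermitian $A$ is $A^{(0)}=A$, $A^{(k+1)}=U_k^*A^{(k)}U_k$, $U_k=R(i_k,j_k,\phi_k,\alpha_k)$, with angles chosen so that entry $(i_k,j_k)$ (hence $(j_k,i_k)$) of $A^{(k+1)}$ is zero. Let $\mathcal{P}_n=\{(r,s):1\le r<s\le n\}$, $N=n(n-1)/2$; an ordering is a sequence listing each element of $\mathcal{P}_n$ exactly once. For an ordering $(i_0,j_0),\dots,(i_{N-1},j_{N-1})$, the cyclic strategy $I_{\mathcal{O}}$ uses $(i_{k\bmod N},j_{k\bmod N})$ as $k$-th pivot pair; a cycle is $N$ consecutive steps. Relations on orderings: an admissible transposition swaps two adjacent pairs with disjoint index sets; $\mathcal{O}\sim\mathcal{O}'$ if one is obtained from the other by finitely many admissible transpositions; $\mathcal{O}\stackrel{\mathsf{s}}{\sim}\mathcal{O}'$ if $\mathcal{O}=[\mathcal{O}_1,\mathcal{O}_2]$, $\mathcal{O}'=[\mathcal{O}_2,\mathcal{O}_1]$ (concatenation); $\mathcal{O}\stackrel{\mathsf{w}}{\sim}\mathcal{O}'$ if there is a chain $\mathcal{O}=\mathcal{O}_0,\dots,\mathcal{O}_r=\mathcal{O}'$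 of orderings whose adjacent terms are $\sim$ or $\stackrel{\mathsf{s}}{\sim}$; the chain is in canonical form if these relations alternate between $\sim$ and $\stackrel{\mathsf{s}}{\sim}$. $\mathcal{O}\stackrel{\mathsf{p}}{\sim}\mathcal{O}'$ if for some permutation $\mathsf{q}$ of $\{1,\dots,n\}$, $\mathcal{O}'$ arises by replacing each pair $(i_k,j_k)$ by the pair with entries $\mathsf{q}(i_k),\mathsf{q}(j_k)$ in increasing order. $\mathcal{C}_c^{(n)}$: orderings $(1,2),(\tau_3(1),3),(\tau_3(2),3),\dots,(\tau_n(1),n),\dots,(\tau_n(n-1),n)$, $\tau_j$ a permutation of $\{1,\dots,j-1\}$; $\mathcal{C}_r^{(n)}$: orderings $(n-1,n),(n-2,\tau_{n-2}(n-1)),(n-2,\tau_{n-2}(n)),\dots,(1,\tau_1(2)),\dots,(1,\tau_1(n))$, $\tau_i$ a permutation of $\{i+1,\dots,n\}$; $\overleftarrow{\mathcal{C}}_c^{(n)},\overleftarrow{\mathcal{C}}_r^{(n)}$ the sets of orderings whose reversed sequences lie in $\mathcal{C}_c^{(n)}$, $\mathcal{C}_r^{(n)}$; $\mathcal{C}_{sp}^{(n)}=\mathcal{C}_c^{(n)}\cup\overleftarrow{\mathcal{C}}_c^{(n)}\cup\mathcal{C}_r^{(n)}\cup\overleftarrow{\mathcal{C}}_r^{(n)}$. $\mathcal{C}_{sg}^{(n)}$ is the set of orderings $\mathcal{O}$ with $\mathcal{O}\stackrel{\mathsf{p}}{\sim}\mathcal{O}'\stackrel{\mathsf{w}}{\sim}\mathcal{O}''$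 or $\mathcal{O}\stackrel{\mathsf{w}}{\sim}\mathcal{O}'\stackrel{\mathsf{p}}{\sim}\mathcal{O}''$ for some ordering $\mathcal{O}'$ and some $\mathcal{O}''\in\mathcal{C}_{sp}^{(n)}$, weak equivalence given in canonical form. *)

theory Defs
  imports Complex_Main
begin

text \<open>Matrices of order n are represented as functions nat => nat => complex,
  only the entries with indices in {1..n} being relevant (1-based, as in the paper).\<close>

type_synonym cmatrix = "nat \<Rightarrow> nat \<Rightarrow> complex"

definition hermitian :: "nat \<Rightarrow> cmatrix \<Rightarrow> bool" where
  "hermitian n A \<longleftrightarrow> (\<forall>r\<in>{1..n}. \<forall>s\<in>{1..n}. A s r = cnj (A r s))"

definition mmul :: "nat \<Rightarrow> cmatrix \<Rightarrow> cmatrix \<Rightarrow> cmatrix" where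
  "mmul n X Y = (\<lambda>r s. \<Sum>k=1..n. X r k * Y k s)"

definition adjoint :: "cmatrix \<Rightarrow> cmatrix" where
  "adjoint X = (\<lambda>r s. cnj (X s r))"

definition rot :: "nat \<Rightarrow> nat \<Rightarrow> real \<Rightarrow> real \<Rightarrow> cmatrix" where
  "rot i j \<phi> \<alpha> = (\<lambda>r s.
     if r = s then (if r = i \<or> r = j then complex_of_real (cos \<phi>) else 1)
     else if r = i \<and> s = j then - exp (\<i> * complex_of_real \<alpha>) * complex_of_real (sin \<phi>)
     else if r = j \<and> s = i then exp (- \<i> * complex_of_real \<alpha>) * complex_of_real (sin \<phi>)
     else 0)"

definition offS :: "nat \<Rightarrow> cmatrix \<Rightarrow> real" where
  "offS n X = sqrt (\<Sum>r\<in>{1..n}. \<Sum>s\<in>{1..n}. if r \<noteq> s then (cmod (X r s))\<^sup>2 else 0)"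

definition pairs :: "nat \<Rightarrow> (nat \<times> nat) set" where
  "pairs n = {(r, s). 1 \<le> r \<and> r < s \<and> s \<le> n}"

definition is_ordering :: "nat \<Rightarrow> (nat \<times> nat) list \<Rightarrow> bool" where
  "is_ordering n Ord \<longleftrightarrow> distinct Ord \<and> set Ord = pairs n"

definition adm_transp :: "(nat \<times> nat) list \<Rightarrow> (nat \<times> nat) list \<Rightarrow> bool" where
  "adm_transp Ord Ord' \<longleftrightarrow> (\<exists>k. Suc k < length Ord \<and>
      {fst (Ord ! k), snd (Ord ! k)} \<inter> {fst (Ord ! Suc k), snd (Ord ! Suc k)} = {} \<and>
      Ord' = Ord[k := Ord ! Suc k, Suc k := Ord ! k])"

definition ord_equiv :: "(nat \<times> nat) list \<Rightarrow> (nat \<times> nat) list \<Rightarrow> bool" where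
  "ord_equiv Ord Ord' \<longleftrightarrow> adm_transp\<^sup>*\<^sup>* Ord Ord'"

definition shift_equiv :: "(nat \<times> nat) list \<Rightarrow> (nat \<times> nat) list \<Rightarrow> bool" where
  "shift_equiv Ord Ord' \<longleftrightarrow> (\<exists>O1 O2. Ord = O1 @ O2 \<and> Ord' = O2 @ O1)"

text \<open>A chain Ord = cs!0, ..., cs!r = Ord' witnessing weak equivalence in canonical form
  (relations alternate between ord_equiv and shift_equiv; b says whether the first
  relation is ord_equiv), containing exactly d shift equivalences.\<close>
definition canon_chain :: "nat \<Rightarrow> (nat \<times> nat) list \<Rightarrow> (nat \<times> nat) list \<Rightarrow> bool" where
  "canon_chain d Ord Ord' \<longleftrightarrow> (\<exists>cs b. cs \<noteq> [] \<and> hd cs = Ord \<and> last cs = Ord' \<and>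
      (\<forall>k. Suc k < length cs \<longrightarrow>
          (if (even k \<longleftrightarrow> b) then ord_equiv (cs ! k) (cs ! Suc k)
           else shift_equiv (cs ! k) (cs ! Suc k))) \<and>
      d = card {k. Suc k < length cs \<and> \<not> (even k \<longleftrightarrow> b)})"

definition perm_equiv :: "nat \<Rightarrow> (nat \<times> nat) list \<Rightarrow> (nat \<times> nat) list \<Rightarrow> bool" where
  "perm_equiv n Ord Ord' \<longleftrightarrow> (\<exists>q. bij_betw q {1..n} {1..n} \<and>
      Ord' = map (\<lambda>(i, j). (min (q i) (q j), max (q i) (q j))) Ord)"

definition C_c :: "nat \<Rightarrow> (nat \<times> nat) list set" where
  "C_c n = {Ord. \<exists>L. (\<forall>j\<in>{2..n}. distinct (L j) \<and> set (L j) = {1..<j}) \<and>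
      Ord = concat (map (\<lambda>j. map (\<lambda>i. (i, j)) (L j)) [2..<Suc n])}"

definition C_r :: "nat \<Rightarrow> (nat \<times> nat) list set" where
  "C_r n = {Ord. \<exists>L. (\<forall>i\<in>{1..<n}. distinct (L i) \<and> set (L i) = {i<..n}) \<and>
      Ord = concat (map (\<lambda>i. map (\<lambda>j. (i, j)) (L i)) (rev [1..<n]))}"

definition C_sp :: "nat \<Rightarrow> (nat \<times> nat) list set" where
  "C_sp n = C_c n \<union> rev ` C_c n \<union> C_r n \<union> rev ` C_r n"

definition jacobi_run :: "nat \<Rightarrow> (nat \<times> nat) list \<Rightarrow> cmatrix \<Rightarrow> (nat \<Rightarrow> cmatrix)
    \<Rightarrow> (nat \<Rightarrow> real) \<Rightarrow> (nat \<Rightarrow> real) \<Rightarrow> bool" where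
  "jacobi_run n Ord A Aseq \<phi> \<alpha> \<longleftrightarrow> Aseq 0 = A \<and>
     (\<forall>k. let i = fst (Ord ! (k mod length Ord)); j = snd (Ord ! (k mod length Ord));
              U = rot i j (\<phi> k) (\<alpha> k) in
          Aseq (Suc k) = mmul n (adjoint U) (mmul n (Aseq k) U) \<and>
          Aseq (Suc k) i j = 0)"

end

theory Submission
  imports Defs "HOL-Analysis.Analysis"
begin

text \<open>One Jacobi step acting on a Hermitian matrix removes exactly the squared moduli
  of the two pivot entries from \<open>S\<^sup>2\<close>, since the rotation preserves the Frobenius norm.
  Call a pivot sequence rigid if the only zero-diagonal matrix that can be rotated along it with
  all pivot entries vanishing at the moment they are reached is zero. For the column- and
  row-cyclic orderings this is seen column by column (row by row), and rigidity is preserved by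
  reversal, by admissible transpositions, by relabelling the indices, and by adding pivots in
  front or behind; a shift equivalence costs one more cycle. Hence \<open>d + 1\<close> cycles of every
  ordering in \<open>C\<^sub>s\<^sub>g\<close> are rigid. Rigidity means that \<open>S\<^sup>2\<close> strictly decreases on the normalized
  matrices; as this set, together with all admissible angles, is compact and the result depends
  continuously on it, the decrease is by a uniform factor \<open>\<gamma> < 1\<close>. Since \<open>S\<^sup>2\<close> never increases, it suffices to
  take each of the finitely many orderings with its least \<open>d\<close>, which gives a \<open>\<gamma>\<close> depending only
  on \<open>n\<close>.\<close>

section \<open>Plane rotations acting on matrices\<close>

text \<open>\<open>rot_conj i j \<phi> w X\<close> is the entrywise form of \<open>U\<^sup>* X U\<close> for \<open>U = rot i j \<phi> \<alpha>\<close> and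
  \<open>w = e\<^sup>i\<^sup>\<alpha>\<close> (lemma \<open>rot_similarity_eq_rot_conj\<close>). Unlike \<open>mmul\<close> it does not depend on the order \<open>n\<close>,
  and \<open>w\<close> may be any unimodular number, so that \<open>rot_conj j i\<close> can be expressed by \<open>rot_conj i j\<close>.\<close>

definition rot_right :: "nat \<Rightarrow> nat \<Rightarrow> complex \<Rightarrow> complex \<Rightarrow> complex \<Rightarrow> cmatrix \<Rightarrow> cmatrix" where
  "rot_right i j c s w X = (\<lambda>r t. if t = i then c * X r i + cnj w * s * X r j
      else if t = j then - (w * s * X r i) + c * X r j else X r t)"

definition rot_left :: "nat \<Rightarrow> nat \<Rightarrow> complex \<Rightarrow> complex \<Rightarrow> complex \<Rightarrow> cmatrix \<Rightarrow> cmatrix" where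
  "rot_left i j c s w Z = (\<lambda>r t. if r = i then c * Z i t + w * s * Z j t
      else if r = j then - (cnj w * s * Z i t) + c * Z j t else Z r t)"

definition rot_conj :: "nat \<Rightarrow> nat \<Rightarrow> real \<Rightarrow> complex \<Rightarrow> cmatrix \<Rightarrow> cmatrix" where
  "rot_conj i j \<phi> w X = rot_left i j (of_real (cos \<phi>)) (of_real (sin \<phi>)) w
      (rot_right i j (of_real (cos \<phi>)) (of_real (sin \<phi>)) w X)"

lemma sum_two_deltas:
  fixes a b :: "'a::comm_monoid_add"
  assumes "finite R" "i \<in> R" "j \<in> R" "i \<noteq> j"
  shows "(\<Sum>k\<in>R. (if k = i then a else 0) + (if k = j then b else 0)) = a + b"
  using assms by (simp add: sum.distrib)

lemma rot_eq_deltas: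
  assumes "i \<noteq> j"
  shows "rot i j \<phi> \<alpha> k t = (if t = i then (if k = i then of_real (cos \<phi>) else 0) +
             (if k = j then cnj (exp (\<i> * of_real \<alpha>)) * of_real (sin \<phi>) else 0)
        else if t = j then (if k = i then - (exp (\<i> * of_real \<alpha>) * of_real (sin \<phi>)) else 0) +
             (if k = j then of_real (cos \<phi>) else 0)
        else (if k = t then 1 else 0))"
  using assms by (auto simp: rot_def exp_cnj)

lemma mmul_rot_eq_rot_right:
  assumes "i \<noteq> j" "i \<in> {1..n}" "j \<in> {1..n}" "t \<in> {1..n}"
  shows "mmul n X (rot i j \<phi> \<alpha>) r t =
    rot_right i j (of_real (cos \<phi>)) (of_real (sin \<phi>)) (exp (\<i> * of_real \<alpha>)) X r t"
proof -
  let ?c = "complex_of_real (cos \<phi>)" and ?s = "complex_of_real (sin \<phi>)"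
    and ?w = "exp (\<i> * complex_of_real \<alpha>)"
  consider "t = i" | "t = j" | "t \<noteq> i" "t \<noteq> j" by blast
  then show ?thesis
  proof cases
    case 1
    have "mmul n X (rot i j \<phi> \<alpha>) r t = (\<Sum>k\<in>{1..n}. (if k = i then X r i * ?c else 0) +
         (if k = j then X r j * (cnj ?w * ?s) else 0))"
      unfolding mmul_def using 1 assms(1) by (intro sum.cong) (auto simp: rot_eq_deltas)
    also have "\<dots> = X r i * ?c + X r j * (cnj ?w * ?s)"
      using assms by (intro sum_two_deltas) auto
    finally show ?thesis using 1 by (simp add: rot_right_def algebra_simps)
  next
    case 2
    have "mmul n X (rot i j \<phi> \<alpha>) r t = (\<Sum>k\<in>{1..n}. (if k = i then X r i * (- (?w * ?s)) else 0) +
         (if k = j then X r j * ?c else 0))"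
      unfolding mmul_def using 2 assms(1) by (intro sum.cong) (auto simp: rot_eq_deltas)
    also have "\<dots> = X r i * (- (?w * ?s)) + X r j * ?c"
      using assms by (intro sum_two_deltas) auto
    finally show ?thesis using 2 assms(1) by (simp add: rot_right_def algebra_simps)
  next
    case 3
    have "mmul n X (rot i j \<phi> \<alpha>) r t = (\<Sum>k\<in>{1..n}. if k = t then X r t else 0)"
      unfolding mmul_def using 3 assms(1) by (intro sum.cong) (auto simp: rot_eq_deltas)
    also have "\<dots> = X r t" using assms by simp
    finally show ?thesis using 3 by (simp add: rot_right_def)
  qed
qed

lemma mmul_adjoint_rot_eq_rot_left:
  assumes "i \<noteq> j" "i \<in> {1..n}" "j \<in> {1..n}" "r \<in> {1..n}"
  shows "mmul n (Defs.adjoint (rot i j \<phi> \<alpha>)) Z r t =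
    rot_left i j (of_real (cos \<phi>)) (of_real (sin \<phi>)) (exp (\<i> * of_real \<alpha>)) Z r t"
proof -
  let ?c = "complex_of_real (cos \<phi>)" and ?s = "complex_of_real (sin \<phi>)"
    and ?w = "exp (\<i> * complex_of_real \<alpha>)"
  consider "r = i" | "r = j" | "r \<noteq> i" "r \<noteq> j" by blast
  then show ?thesis
  proof cases
    case 1
    have "mmul n (Defs.adjoint (rot i j \<phi> \<alpha>)) Z r t = (\<Sum>k\<in>{1..n}. (if k = i then ?c * Z i t else 0) +
         (if k = j then ?w * ?s * Z j t else 0))"
      unfolding mmul_def Defs.adjoint_def using 1 assms(1)
      by (intro sum.cong) (auto simp: rot_eq_deltas)
    also have "\<dots> = ?c * Z i t + ?w * ?s * Z j t"
      using assms by (intro sum_two_deltas) auto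
    finally show ?thesis using 1 by (simp add: rot_left_def algebra_simps)
  next
    case 2
    have "mmul n (Defs.adjoint (rot i j \<phi> \<alpha>)) Z r t = (\<Sum>k\<in>{1..n}. (if k = i then - (cnj ?w * ?s) * Z i t else 0) +
         (if k = j then ?c * Z j t else 0))"
      unfolding mmul_def Defs.adjoint_def using 2 assms(1)
      by (intro sum.cong) (auto simp: rot_eq_deltas)
    also have "\<dots> = - (cnj ?w * ?s) * Z i t + ?c * Z j t"
      using assms by (intro sum_two_deltas) auto
    finally show ?thesis using 2 assms(1) by (simp add: rot_left_def algebra_simps)
  next
    case 3
    have "mmul n (Defs.adjoint (rot i j \<phi> \<alpha>)) Z r t = (\<Sum>k\<in>{1..n}. if k = r then Z r t else 0)"
      unfolding mmul_def Defs.adjoint_def using 3 assms(1)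
      by (intro sum.cong) (auto simp: rot_eq_deltas)
    also have "\<dots> = Z r t" using assms by simp
    finally show ?thesis using 3 by (simp add: rot_left_def)
  qed
qed

lemma rot_similarity_eq_rot_conj:
  assumes "i \<noteq> j" "i \<in> {1..n}" "j \<in> {1..n}" "r \<in> {1..n}" "t \<in> {1..n}"
  shows "mmul n (Defs.adjoint (rot i j \<phi> \<alpha>)) (mmul n X (rot i j \<phi> \<alpha>)) r t =
    rot_conj i j \<phi> (exp (\<i> * of_real \<alpha>)) X r t"
  using assms mmul_rot_eq_rot_right[OF assms(1-3)]
  by (simp add: mmul_adjoint_rot_eq_rot_left rot_conj_def rot_left_def)

lemma unimodular_mult_cnj: "cmod w = 1 \<Longrightarrow> w * cnj w = 1"
  by (metis complex_norm_square mult.right_neutral of_real_1 power2_eq_square)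

lemma rot_right_inverse:
  assumes "i \<noteq> j" "c * c + s * s = 1" "w * cnj w = 1"
  shows "rot_right i j c (- s) w (rot_right i j c s w X) = X"
proof (intro ext)
  fix r t
  have "c * (c * a + cnj w * s * b) + cnj w * - s * (- (w * s * a) + c * b) =
      (c * c + (w * cnj w) * (s * s)) * a"
    "- (w * - s * (c * a + cnj w * s * b)) + c * (- (w * s * a) + c * b) =
      (c * c + (w * cnj w) * (s * s)) * b" for a b
    by (simp_all add: algebra_simps)
  then show "rot_right i j c (- s) w (rot_right i j c s w X) r t = X r t"
    using assms by (auto simp: rot_right_def)
qed

lemma rot_left_inverse:
  assumes "i \<noteq> j" "c * c + s * s = 1" "w * cnj w = 1"
  shows "rot_left i j c (- s) w (rot_left i j c s w X) = X"
proof (intro ext)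
  fix r t
  have "c * (c * a + w * s * b) + w * - s * (- (cnj w * s * a) + c * b) =
      (c * c + (w * cnj w) * (s * s)) * a"
    "- (cnj w * - s * (c * a + w * s * b)) + c * (- (cnj w * s * a) + c * b) =
      (c * c + (w * cnj w) * (s * s)) * b" for a b
    by (simp_all add: algebra_simps)
  then show "rot_left i j c (- s) w (rot_left i j c s w X) r t = X r t"
    using assms by (auto simp: rot_left_def)
qed

lemma rot_left_rot_right_commute:
  "rot_left i j c s w (rot_right k l c' s' w' X) = rot_right k l c' s' w' (rot_left i j c s w X)"
  by (intro ext) (auto simp: rot_left_def rot_right_def algebra_simps)

lemma rot_conj_inverse:
  assumes "i \<noteq> j" "cmod w = 1"
  shows "rot_conj i j (- \<phi>) w (rot_conj i j \<phi> w X) = X"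
proof -
  have cs: "complex_of_real (cos \<phi>) * of_real (cos \<phi>) + of_real (sin \<phi>) * of_real (sin \<phi>) = 1"
    by (metis of_real_1 of_real_add of_real_mult sin_cos_squared_add3 add.commute)
  note ww = unimodular_mult_cnj[OF assms(2)]
  show ?thesis
    unfolding rot_conj_def cos_minus sin_minus of_real_minus
    by (simp add: rot_left_rot_right_commute rot_left_inverse[OF assms(1) cs ww]
        rot_right_inverse[OF assms(1) cs ww])
qed

lemma rot_conj_swap:
  assumes "i \<noteq> j"
  shows "rot_conj j i \<phi> w X = rot_conj i j (- \<phi>) (cnj w) X"
  using assms by (intro ext) (auto simp: rot_conj_def rot_left_def rot_right_def algebra_simps)

lemma rot_conj_commute:
  assumes "i \<noteq> k" "i \<noteq> l" "j \<noteq> k" "j \<noteq> l"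
  shows "rot_conj i j \<phi> w (rot_conj k l \<psi> v X) = rot_conj k l \<psi> v (rot_conj i j \<phi> w X)"
  using assms by (intro ext) (auto simp: rot_conj_def rot_left_def rot_right_def algebra_simps)

lemma rot_conj_outside:
  "r \<noteq> i \<Longrightarrow> r \<noteq> j \<Longrightarrow> s \<noteq> i \<Longrightarrow> s \<noteq> j \<Longrightarrow> rot_conj i j \<phi> w X r s = X r s"
  by (simp add: rot_conj_def rot_left_def rot_right_def)

lemma rot_conj_zero [simp]: "rot_conj i j \<phi> w (\<lambda>_ _. 0) = (\<lambda>_ _. 0)"
  by (intro ext) (simp add: rot_conj_def rot_left_def rot_right_def)

lemma rot_conj_scale: "rot_conj i j \<phi> w (\<lambda>r s. a * X r s) = (\<lambda>r s. a * rot_conj i j \<phi> w X r s)"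
  by (intro ext) (simp add: rot_conj_def rot_left_def rot_right_def algebra_simps)

lemma rot_conj_pivot_block_zero:
  assumes "i \<noteq> j" "X i i = 0" "X j j = 0" "X i j = 0" "X j i = 0"
  shows "rot_conj i j \<phi> w X i i = 0" "rot_conj i j \<phi> w X j j = 0"
    "rot_conj i j \<phi> w X i j = 0" "rot_conj i j \<phi> w X j i = 0"
  using assms by (simp_all add: rot_conj_def rot_left_def rot_right_def)

section \<open>The off-diagonal norm under Jacobi steps\<close>

definition off2 :: "nat \<Rightarrow> cmatrix \<Rightarrow> real" where
  "off2 n X = (\<Sum>r\<in>{1..n}. \<Sum>s\<in>{1..n}. if r \<noteq> s then (cmod (X r s))\<^sup>2 else 0)"

definition frob2 :: "nat \<Rightarrow> cmatrix \<Rightarrow> real" where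
  "frob2 n X = (\<Sum>r\<in>{1..n}. \<Sum>s\<in>{1..n}. (cmod (X r s))\<^sup>2)"

definition supported_in :: "nat \<Rightarrow> cmatrix \<Rightarrow> bool" where
  "supported_in n X \<longleftrightarrow> (\<forall>r s. r \<notin> {1..n} \<or> s \<notin> {1..n} \<longrightarrow> X r s = 0)"

definition zero_diag :: "cmatrix \<Rightarrow> bool" where
  "zero_diag X \<longleftrightarrow> (\<forall>r. X r r = 0)"

definition adm_angles :: "(nat \<Rightarrow> real) \<Rightarrow> (nat \<Rightarrow> complex) \<Rightarrow> bool" where
  "adm_angles \<phi> w \<longleftrightarrow> (\<forall>k. \<bar>\<phi> k\<bar> \<le> pi / 4) \<and> (\<forall>k. cmod (w k) = 1)"

definition pivots_in :: "nat \<Rightarrow> (nat \<Rightarrow> nat \<times> nat) \<Rightarrow> nat \<Rightarrow> bool" where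
  "pivots_in n P M \<longleftrightarrow> (\<forall>k<M. P k \<in> pairs n)"

lemma pairs_neq: "p \<in> pairs n \<Longrightarrow> fst p \<noteq> snd p"
  by (auto simp: pairs_def)

lemma pairs_range: "p \<in> pairs n \<Longrightarrow> fst p \<in> {1..n} \<and> snd p \<in> {1..n}"
  by (auto simp: pairs_def)

lemma pivots_in_mono: "pivots_in n P M \<Longrightarrow> M' \<le> M \<Longrightarrow> pivots_in n P M'"
  by (auto simp: pivots_in_def)

lemma unimodular_rotation_norm2:
  fixes c s :: real
  assumes "c * c + s * s = 1" "cmod w = 1"
  shows "(cmod (of_real c * a + cnj w * of_real s * b))\<^sup>2 + (cmod (- (w * of_real s * a) + of_real c * b))\<^sup>2
     = (cmod a)\<^sup>2 + (cmod b)\<^sup>2"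
proof -
  have cc: "complex_of_real c * complex_of_real c + complex_of_real s * complex_of_real s = 1"
    using assms(1) by (metis of_real_1 of_real_add of_real_mult)
  let ?x = "of_real c * a + cnj w * of_real s * b" and ?y = "- (w * of_real s * a) + of_real c * b"
  have "complex_of_real ((cmod ?x)\<^sup>2 + (cmod ?y)\<^sup>2) = ?x * cnj ?x + ?y * cnj ?y"
    by (simp only: of_real_add complex_norm_square)
  also have "\<dots> = (complex_of_real c * complex_of_real c + (w * cnj w) * (complex_of_real s * complex_of_real s))
      * (a * cnj a + b * cnj b)"
    by (simp add: algebra_simps)
  also have "\<dots> = a * cnj a + b * cnj b" using unimodular_mult_cnj[OF assms(2)] cc by simp
  also have "\<dots> = complex_of_real ((cmod a)\<^sup>2 + (cmod b)\<^sup>2)"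
    by (simp only: of_real_add complex_norm_square)
  finally show ?thesis using of_real_eq_iff by blast
qed

lemma sum_eq_if_two_terms_eq:
  fixes f g :: "'a \<Rightarrow> 'b::comm_monoid_add"
  assumes "finite R" "i \<in> R" "j \<in> R" "i \<noteq> j" "\<And>t. t \<in> R \<Longrightarrow> t \<noteq> i \<Longrightarrow> t \<noteq> j \<Longrightarrow> f t = g t"
    "f i + f j = g i + g j"
  shows "sum f R = sum g R"
proof -
  have "sum f R = f i + (f j + sum f (R - {i} - {j}))"
    using assms by (simp add: sum.remove[of R i] sum.remove[of "R - {i}" j])
  also have "sum f (R - {i} - {j}) = sum g (R - {i} - {j})"
    using assms(5) by (intro sum.cong) auto
  also have "f i + (f j + sum g (R - {i} - {j})) = g i + (g j + sum g (R - {i} - {j}))"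
    using assms(6) by (simp add: add.assoc[symmetric])
  also have "\<dots> = sum g R"
    using assms by (simp add: sum.remove[of R i] sum.remove[of "R - {i}" j])
  finally show ?thesis .
qed

lemma row_norm2_rot_right:
  assumes "i \<in> {1..n}" "j \<in> {1..n}" "i \<noteq> j" "cmod w = 1"
  shows "(\<Sum>t\<in>{1..n}. (cmod (rot_right i j (of_real (cos \<phi>)) (of_real (sin \<phi>)) w X r t))\<^sup>2)
    = (\<Sum>t\<in>{1..n}. (cmod (X r t))\<^sup>2)"
proof (rule sum_eq_if_two_terms_eq[OF _ assms(1-3)])
  show "(cmod (rot_right i j (of_real (cos \<phi>)) (of_real (sin \<phi>)) w X r i))\<^sup>2
      + (cmod (rot_right i j (of_real (cos \<phi>)) (of_real (sin \<phi>)) w X r j))\<^sup>2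
      = (cmod (X r i))\<^sup>2 + (cmod (X r j))\<^sup>2"
    using unimodular_rotation_norm2[of "cos \<phi>" "sin \<phi>" w "X r i" "X r j"] assms(3,4)
    by (simp add: rot_right_def sin_cos_squared_add3)
qed (auto simp: rot_right_def)

lemma col_norm2_rot_left:
  assumes "i \<in> {1..n}" "j \<in> {1..n}" "i \<noteq> j" "cmod w = 1"
  shows "(\<Sum>r\<in>{1..n}. (cmod (rot_left i j (of_real (cos \<phi>)) (of_real (sin \<phi>)) w Z r t))\<^sup>2)
    = (\<Sum>r\<in>{1..n}. (cmod (Z r t))\<^sup>2)"
proof (rule sum_eq_if_two_terms_eq[OF _ assms(1-3)])
  show "(cmod (rot_left i j (of_real (cos \<phi>)) (of_real (sin \<phi>)) w Z i t))\<^sup>2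
      + (cmod (rot_left i j (of_real (cos \<phi>)) (of_real (sin \<phi>)) w Z j t))\<^sup>2
      = (cmod (Z i t))\<^sup>2 + (cmod (Z j t))\<^sup>2"
    using unimodular_rotation_norm2[of "cos \<phi>" "sin \<phi>" "cnj w" "Z i t" "Z j t"] assms(3,4)
    by (simp add: rot_left_def sin_cos_squared_add3)
qed (auto simp: rot_left_def)

lemma frob2_rot_conj:
  assumes "i \<in> {1..n}" "j \<in> {1..n}" "i \<noteq> j" "cmod w = 1"
  shows "frob2 n (rot_conj i j \<phi> w X) = frob2 n X"
proof -
  let ?Z = "rot_right i j (of_real (cos \<phi>)) (of_real (sin \<phi>)) w X"
  have "frob2 n (rot_conj i j \<phi> w X) =
      (\<Sum>t\<in>{1..n}. \<Sum>r\<in>{1..n}. (cmod (rot_left i j (of_real (cos \<phi>)) (of_real (sin \<phi>)) w ?Z r t))\<^sup>2)"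
    unfolding frob2_def rot_conj_def by (rule sum.swap)
  also have "\<dots> = (\<Sum>t\<in>{1..n}. \<Sum>r\<in>{1..n}. (cmod (?Z r t))\<^sup>2)"
    using col_norm2_rot_left[OF assms] by simp
  also have "\<dots> = (\<Sum>r\<in>{1..n}. \<Sum>t\<in>{1..n}. (cmod (?Z r t))\<^sup>2)" by (rule sum.swap)
  also have "\<dots> = frob2 n X" unfolding frob2_def using row_norm2_rot_right[OF assms] by simp
  finally show ?thesis .
qed

lemma off2_eq_frob2: "zero_diag X \<Longrightarrow> off2 n X = frob2 n X"
  unfolding off2_def frob2_def zero_diag_def by (intro sum.cong refl) auto

lemma off2_nonneg: "off2 n X \<ge> 0"
  unfolding off2_def by (intro sum_nonneg) auto

lemma entry_norm2_le_off2:
  assumes "r \<in> {1..n}" "s \<in> {1..n}" "r \<noteq> s"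
  shows "(cmod (X r s))\<^sup>2 \<le> off2 n X"
proof -
  have "(cmod (X r s))\<^sup>2 \<le> (\<Sum>s\<in>{1..n}. if r \<noteq> s then (cmod (X r s))\<^sup>2 else 0)"
    using member_le_sum[of s "{1..n}" "\<lambda>s. if r \<noteq> s then (cmod (X r s))\<^sup>2 else 0"] assms by auto
  also have "\<dots> \<le> off2 n X" unfolding off2_def
    using assms by (intro member_le_sum) (auto intro: sum_nonneg)
  finally show ?thesis .
qed

lemma off2_scale: "off2 n (\<lambda>r s. a * X r s) = (cmod a)\<^sup>2 * off2 n X"
  unfolding off2_def sum_distrib_left by (intro sum.cong refl) (simp add: norm_mult power_mult_distrib)

lemma sum_sum_supported_on_pair:
  fixes f :: "nat \<Rightarrow> nat \<Rightarrow> real"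
  assumes "i \<in> {1..n}" "j \<in> {1..n}" "i \<noteq> j"
    "\<And>r s. \<not> ((r = i \<or> r = j) \<and> (s = i \<or> s = j)) \<Longrightarrow> f r s = 0"
  shows "(\<Sum>r\<in>{1..n}. \<Sum>s\<in>{1..n}. f r s) = f i i + f i j + f j i + f j j"
proof -
  have "(\<Sum>s\<in>{1..n}. f r s) = (if r = i \<or> r = j then f r i + f r j else 0)" for r
  proof (cases "r = i \<or> r = j")
    case True
    have "(\<Sum>s\<in>{1..n}. f r s) = (\<Sum>s\<in>{i, j}. f r s)"
      using assms True by (intro sum.mono_neutral_right) auto
    then show ?thesis using True assms(3) by simp
  qed (use assms(4) in simp)
  then have "(\<Sum>r\<in>{1..n}. \<Sum>s\<in>{1..n}. f r s) = (\<Sum>r\<in>{1..n}. if r = i \<or> r = j then f r i + f r j else 0)"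
    by simp
  also have "\<dots> = (\<Sum>r\<in>{i, j}. if r = i \<or> r = j then f r i + f r j else 0)"
    using assms by (intro sum.mono_neutral_right) auto
  finally show ?thesis using assms(3) by simp
qed

definition pivot_block :: "nat \<Rightarrow> nat \<Rightarrow> cmatrix \<Rightarrow> cmatrix" where
  "pivot_block i j X = (\<lambda>r s. if (r = i \<or> r = j) \<and> (s = i \<or> s = j) then X r s else 0)"

lemma rot_conj_pivot_block:
  assumes "i \<noteq> j"
  shows "rot_conj i j \<phi> w (pivot_block i j X) = pivot_block i j (rot_conj i j \<phi> w X)"
  using assms by (intro ext) (auto simp: rot_conj_def rot_left_def rot_right_def pivot_block_def)

text \<open>The off-diagonal part of the next iterate (lemma \<open>off_part_jacobi_run\<close>); the pivot entries
  are dropped because the Jacobi step annihilates them.\<close>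

definition jacobi_step_off :: "nat \<Rightarrow> nat \<Rightarrow> real \<Rightarrow> complex \<Rightarrow> cmatrix \<Rightarrow> cmatrix" where
  "jacobi_step_off i j \<phi> w X = (\<lambda>r s.
     if r = s \<or> (r = i \<and> s = j) \<or> (r = j \<and> s = i) then 0 else rot_conj i j \<phi> w X r s)"

lemma zero_diag_jacobi_step_off: "zero_diag (jacobi_step_off i j \<phi> w X)"
  by (simp add: zero_diag_def jacobi_step_off_def)

text \<open>The rotation preserves the Frobenius norm of the whole matrix and of the
  \<open>2 \<times> 2\<close> pivot block, so what is discarded is exactly the old pivot block.\<close>

lemma off2_jacobi_step_off:
  assumes "i \<in> {1..n}" "j \<in> {1..n}" "i \<noteq> j" "cmod w = 1" "zero_diag X"
  shows "off2 n (jacobi_step_off i j \<phi> w X) = off2 n X - (cmod (X i j))\<^sup>2 - (cmod (X j i))\<^sup>2"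
proof -
  let ?C = "rot_conj i j \<phi> w X"
  have diag_C: "?C r r = 0" if "r \<noteq> i" "r \<noteq> j" for r
    using rot_conj_outside[OF that that] assms(5) by (simp add: zero_diag_def)
  have "frob2 n ?C = frob2 n (jacobi_step_off i j \<phi> w X) + (\<Sum>r\<in>{1..n}. \<Sum>s\<in>{1..n}.
      (if (r = i \<or> r = j) \<and> (s = i \<or> s = j) then (cmod (?C r s))\<^sup>2 else 0))"
    unfolding frob2_def sum.distrib[symmetric]
    by (intro sum.cong refl) (auto simp: jacobi_step_off_def diag_C)
  also have "(\<Sum>r\<in>{1..n}. \<Sum>s\<in>{1..n}.
      (if (r = i \<or> r = j) \<and> (s = i \<or> s = j) then (cmod (?C r s))\<^sup>2 else 0))
      = frob2 n (pivot_block i j ?C)"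
    unfolding frob2_def pivot_block_def by (intro sum.cong refl) auto
  also have "\<dots> = frob2 n (pivot_block i j X)"
    using frob2_rot_conj[OF assms(1-4)] rot_conj_pivot_block[OF assms(3)] by metis
  also have "\<dots> = (cmod (X i j))\<^sup>2 + (cmod (X j i))\<^sup>2"
    unfolding frob2_def
    by (subst sum_sum_supported_on_pair[OF assms(1-3)])
      (use assms(3,5) in \<open>auto simp: pivot_block_def zero_diag_def\<close>)
  finally have "frob2 n ?C = frob2 n (jacobi_step_off i j \<phi> w X) + ((cmod (X i j))\<^sup>2 + (cmod (X j i))\<^sup>2)" .
  moreover have "frob2 n ?C = off2 n X"
    using frob2_rot_conj[OF assms(1-4)] off2_eq_frob2[OF assms(5)] by simp
  ultimately show ?thesis using off2_eq_frob2[OF zero_diag_jacobi_step_off] by simp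
qed

lemma supported_in_rot_conj:
  "i \<in> {1..n} \<Longrightarrow> j \<in> {1..n} \<Longrightarrow> supported_in n X \<Longrightarrow> supported_in n (rot_conj i j \<phi> w X)"
  unfolding supported_in_def by (auto simp: rot_conj_def rot_left_def rot_right_def)

lemma supported_in_jacobi_step_off:
  "i \<in> {1..n} \<Longrightarrow> j \<in> {1..n} \<Longrightarrow> supported_in n X \<Longrightarrow> supported_in n (jacobi_step_off i j \<phi> w X)"
  using supported_in_rot_conj[of i n j X \<phi> w] by (auto simp: supported_in_def jacobi_step_off_def)

lemma jacobi_step_off_scale:
  "jacobi_step_off i j \<phi> w (\<lambda>r s. a * X r s) = (\<lambda>r s. a * jacobi_step_off i j \<phi> w X r s)"
  by (intro ext) (simp add: jacobi_step_off_def rot_conj_scale)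

fun jacobi_off :: "(nat \<Rightarrow> nat \<times> nat) \<Rightarrow> (nat \<Rightarrow> real) \<Rightarrow> (nat \<Rightarrow> complex) \<Rightarrow> cmatrix \<Rightarrow> nat \<Rightarrow> cmatrix" where
  "jacobi_off P \<phi> w X 0 = X"
| "jacobi_off P \<phi> w X (Suc k) = jacobi_step_off (fst (P k)) (snd (P k)) (\<phi> k) (w k) (jacobi_off P \<phi> w X k)"

lemma zero_diag_jacobi_off: "zero_diag X \<Longrightarrow> zero_diag (jacobi_off P \<phi> w X k)"
  by (cases k) (simp_all add: zero_diag_jacobi_step_off)

lemma jacobi_off_scale: "jacobi_off P \<phi> w (\<lambda>r s. a * X r s) k = (\<lambda>r s. a * jacobi_off P \<phi> w X k r s)"
  by (induction k) (simp_all add: jacobi_step_off_scale)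

definition pivot_loss :: "(nat \<Rightarrow> nat \<times> nat) \<Rightarrow> (nat \<Rightarrow> real) \<Rightarrow> (nat \<Rightarrow> complex) \<Rightarrow> cmatrix \<Rightarrow> nat \<Rightarrow> real" where
  "pivot_loss P \<phi> w X k = (cmod (jacobi_off P \<phi> w X k (fst (P k)) (snd (P k))))\<^sup>2
     + (cmod (jacobi_off P \<phi> w X k (snd (P k)) (fst (P k))))\<^sup>2"

lemma pivot_loss_nonneg: "pivot_loss P \<phi> w X k \<ge> 0"
  by (simp add: pivot_loss_def)

lemma off2_jacobi_off:
  assumes "pivots_in n P k" "adm_angles \<phi> w" "zero_diag X"
  shows "off2 n (jacobi_off P \<phi> w X k) = off2 n X - (\<Sum>t<k. pivot_loss P \<phi> w X t)"
  using assms(1)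
proof (induction k)
  case (Suc k)
  then have p: "P k \<in> pairs n" and "pivots_in n P k" by (auto simp: pivots_in_def)
  moreover have "cmod (w k) = 1" using assms(2) by (simp add: adm_angles_def)
  ultimately show ?case
    using Suc off2_jacobi_step_off[OF _ _ pairs_neq[OF p]] pairs_range[OF p] zero_diag_jacobi_off[OF assms(3)]
    by (simp add: pivot_loss_def)
qed simp

lemma off2_jacobi_off_antimono:
  assumes "pivots_in n P k'" "adm_angles \<phi> w" "zero_diag X" "k \<le> k'"
  shows "off2 n (jacobi_off P \<phi> w X k') \<le> off2 n (jacobi_off P \<phi> w X k)"
proof -
  have "(\<Sum>t<k. pivot_loss P \<phi> w X t) \<le> (\<Sum>t<k'. pivot_loss P \<phi> w X t)"
    using assms(4) by (intro sum_mono2) (auto simp: pivot_loss_nonneg)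
  then show ?thesis
    using off2_jacobi_off[OF assms(1-3)] off2_jacobi_off[OF pivots_in_mono[OF assms(1,4)] assms(2,3)]
    by simp
qed

lemma hermitian_similarity:
  assumes h: "hermitian n X"
  shows "hermitian n (mmul n (Defs.adjoint U) (mmul n X U))"
  unfolding hermitian_def
proof (intro ballI)
  fix r s assume r: "r \<in> {1..n}" and s: "s \<in> {1..n}"
  let ?Y = "mmul n (Defs.adjoint U) (mmul n X U)"
  have Ysr: "?Y s r = (\<Sum>k\<in>{1..n}. \<Sum>l\<in>{1..n}. cnj (U k s) * X k l * U l r)"
    by (simp only: mmul_def Defs.adjoint_def sum_distrib_left mult.assoc)
  have "cnj (?Y r s) = (\<Sum>k\<in>{1..n}. \<Sum>l\<in>{1..n}. U k r * cnj (X k l) * cnj (U l s))"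
    by (simp only: mmul_def Defs.adjoint_def cnj_sum complex_cnj_mult complex_cnj_cnj
        sum_distrib_left mult.assoc)
  also have "\<dots> = (\<Sum>k\<in>{1..n}. \<Sum>l\<in>{1..n}. cnj (U l s) * X l k * U k r)"
  proof (intro sum.cong refl)
    fix k l assume "k \<in> {1..n}" "l \<in> {1..n}"
    then have "X l k = cnj (X k l)" using h unfolding hermitian_def by blast
    then have "cnj (X k l) = X l k" by simp
    then show "U k r * cnj (X k l) * cnj (U l s) = cnj (U l s) * X l k * U k r"
      by (simp only: mult.commute mult.left_commute)
  qed
  also have "\<dots> = (\<Sum>l\<in>{1..n}. \<Sum>k\<in>{1..n}. cnj (U l s) * X l k * U k r)"
    by (rule sum.swap)
  finally show "?Y s r = cnj (?Y r s)" using Ysr by simp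
qed

lemma jacobi_run_hermitian:
  assumes "jacobi_run n Ord A Aseq \<phi> \<alpha>" "hermitian n A"
  shows "hermitian n (Aseq k)"
proof (induction k)
  case 0 then show ?case using assms by (simp add: jacobi_run_def)
next
  case (Suc k)
  obtain U where "Aseq (Suc k) = mmul n (Defs.adjoint U) (mmul n (Aseq k) U)"
    using assms(1) unfolding jacobi_run_def Let_def by blast
  then show ?case using hermitian_similarity[OF Suc.IH] by simp
qed

definition off_part :: "nat \<Rightarrow> cmatrix \<Rightarrow> cmatrix" where
  "off_part n X = (\<lambda>r s. if r \<in> {1..n} \<and> s \<in> {1..n} \<and> r \<noteq> s then X r s else 0)"

lemma supported_in_off_part: "supported_in n (off_part n X)"
  by (auto simp: supported_in_def off_part_def)

lemma zero_diag_off_part: "zero_diag (off_part n X)"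
  by (auto simp: zero_diag_def off_part_def)

lemma off2_off_part: "off2 n (off_part n X) = (offS n X)\<^sup>2"
proof -
  have "off2 n (off_part n X) = off2 n X"
    unfolding off2_def off_part_def by (intro sum.cong refl) auto
  then show ?thesis
    using off2_nonneg[of n X] unfolding offS_def off2_def[symmetric] by simp
qed

lemma off_part_jacobi_step:
  assumes ij: "i \<in> {1..n}" "j \<in> {1..n}" "i \<noteq> j"
    and step: "Y = mmul n (Defs.adjoint (rot i j \<phi> \<alpha>)) (mmul n X (rot i j \<phi> \<alpha>))"
    and herm: "hermitian n Y" and pivot: "Y i j = 0"
  shows "off_part n Y = jacobi_step_off i j \<phi> (exp (\<i> * of_real \<alpha>)) (off_part n X)"
proof (intro ext)
  fix r t
  have "Y j i = cnj (Y i j)" using herm ij unfolding hermitian_def by blast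
  then have "Y j i = 0" using pivot by simp
  moreover have "rot_conj i j \<phi> w X r t = rot_conj i j \<phi> w (off_part n X) r t"
    if "r \<in> {1..n}" "t \<in> {1..n}" "r \<noteq> t" "\<not> (r = i \<and> t = j)" "\<not> (r = j \<and> t = i)" for w
    using that ij by (auto simp: rot_conj_def rot_left_def rot_right_def off_part_def)
  moreover have "supported_in n (rot_conj i j \<phi> w (off_part n X))" for w
    using supported_in_rot_conj[OF ij(1,2) supported_in_off_part] .
  ultimately show "off_part n Y r t = jacobi_step_off i j \<phi> (exp (\<i> * of_real \<alpha>)) (off_part n X) r t"
    using pivot rot_similarity_eq_rot_conj[OF ij(3,1,2)]
    by (auto simp: off_part_def jacobi_step_off_def step supported_in_def)
qed

lemma off_part_jacobi_run:
  assumes run: "jacobi_run n Ord A Aseq \<phi> \<alpha>" and herm: "hermitian n A"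
    and ord: "set Ord \<subseteq> pairs n" "Ord \<noteq> []"
  shows "off_part n (Aseq k) =
    jacobi_off (\<lambda>k. Ord ! (k mod length Ord)) \<phi> (\<lambda>k. exp (\<i> * of_real (\<alpha> k))) (off_part n A) k"
proof (induction k)
  case 0 then show ?case using run by (simp add: jacobi_run_def)
next
  case (Suc k)
  define i where "i = fst (Ord ! (k mod length Ord))"
  define j where "j = snd (Ord ! (k mod length Ord))"
  have "Ord ! (k mod length Ord) \<in> set Ord" using ord(2) by simp
  then have "(i, j) \<in> pairs n" using ord(1) by (auto simp: i_def j_def)
  then have ij: "i \<in> {1..n}" "j \<in> {1..n}" "i \<noteq> j" by (auto simp: pairs_def)
  have "Aseq (Suc k) = mmul n (Defs.adjoint (rot i j (\<phi> k) (\<alpha> k))) (mmul n (Aseq k) (rot i j (\<phi> k) (\<alpha> k)))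
    \<and> Aseq (Suc k) i j = 0"
    using spec[OF run[unfolded jacobi_run_def, THEN conjunct2], of k] unfolding Let_def i_def j_def .
  from off_part_jacobi_step[OF ij this[THEN conjunct1] jacobi_run_hermitian[OF run herm] this[THEN conjunct2]]
  show ?case using Suc by (auto simp: i_def j_def)
qed

section \<open>Rigid pivot sequences\<close>

fun rot_seq :: "(nat \<Rightarrow> nat \<times> nat) \<Rightarrow> (nat \<Rightarrow> real) \<Rightarrow> (nat \<Rightarrow> complex) \<Rightarrow> cmatrix \<Rightarrow> nat \<Rightarrow> cmatrix" where
  "rot_seq P \<phi> w X 0 = X"
| "rot_seq P \<phi> w X (Suc k) = rot_conj (fst (P k)) (snd (P k)) (\<phi> k) (w k) (rot_seq P \<phi> w X k)"

definition pivots_zero :: "(nat \<Rightarrow> nat \<times> nat) \<Rightarrow> (nat \<Rightarrow> real) \<Rightarrow> (nat \<Rightarrow> complex) \<Rightarrow> cmatrix \<Rightarrow> nat \<Rightarrow> bool" where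
  "pivots_zero P \<phi> w X M \<longleftrightarrow> (\<forall>k<M. rot_seq P \<phi> w X k (fst (P k)) (snd (P k)) = 0 \<and>
      rot_seq P \<phi> w X k (snd (P k)) (fst (P k)) = 0)"

text \<open>Rigidity excludes the matrices that are fixed points of the off-norm under the Jacobi
  steps (lemma \<open>pivots_zero_if_off2_not_decreased\<close>).\<close>

definition rigid :: "nat \<Rightarrow> (nat \<Rightarrow> nat \<times> nat) \<Rightarrow> nat \<Rightarrow> bool" where
  "rigid n P M \<longleftrightarrow> (\<forall>X \<phi> w. supported_in n X \<longrightarrow> zero_diag X \<longrightarrow> adm_angles \<phi> w \<longrightarrow>
      pivots_zero P \<phi> w X M \<longrightarrow> X = (\<lambda>_ _. 0))"

definition rigid_list :: "nat \<Rightarrow> (nat \<times> nat) list \<Rightarrow> bool" where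
  "rigid_list n ps \<longleftrightarrow> set ps \<subseteq> pairs n \<and> rigid n (nth ps) (length ps)"

lemma pivots_in_nth: "set ps \<subseteq> pairs n \<Longrightarrow> m \<le> length ps \<Longrightarrow> pivots_in n (nth ps) m"
  unfolding pivots_in_def by (meson less_le_trans nth_mem subsetD)

lemma rot_seq_add:
  "rot_seq P \<phi> w X (m + t) = rot_seq (\<lambda>k. P (m + k)) (\<lambda>k. \<phi> (m + k)) (\<lambda>k. w (m + k)) (rot_seq P \<phi> w X m) t"
  by (induction t) auto

lemma rot_seq_cong:
  "(\<And>k. k < t \<Longrightarrow> P k = P' k \<and> \<phi> k = \<phi>' k \<and> w k = w' k) \<Longrightarrow> rot_seq P \<phi> w X t = rot_seq P' \<phi>' w' X t"
  by (induction t) auto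

lemma rot_seq_zero [simp]: "rot_seq P \<phi> w (\<lambda>_ _. 0) t = (\<lambda>_ _. 0)"
  by (induction t) simp_all

lemma pivots_zero_mono: "pivots_zero P \<phi> w X M \<Longrightarrow> M' \<le> M \<Longrightarrow> pivots_zero P \<phi> w X M'"
  by (auto simp: pivots_zero_def)

lemma pivots_zero_add:
  "pivots_zero P \<phi> w X (m + t) \<longleftrightarrow> pivots_zero P \<phi> w X m \<and>
     pivots_zero (\<lambda>k. P (m + k)) (\<lambda>k. \<phi> (m + k)) (\<lambda>k. w (m + k)) (rot_seq P \<phi> w X m) t"
proof -
  have "(\<forall>k<m + t. Q k) \<longleftrightarrow> (\<forall>k<m. Q k) \<and> (\<forall>k<t. Q (m + k))" for Q
    by (metis add_diff_inverse_nat add_less_cancel_left trans_less_add1)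
  then show ?thesis unfolding pivots_zero_def by (simp add: rot_seq_add)
qed

lemma pivots_zero_cong:
  assumes "\<And>k. k < M \<Longrightarrow> P k = P' k"
  shows "pivots_zero P \<phi> w X M \<longleftrightarrow> pivots_zero P' \<phi> w X M"
proof -
  have "rot_seq P \<phi> w X k = rot_seq P' \<phi> w X k" if "k < M" for k
    using that assms by (intro rot_seq_cong) auto
  then show ?thesis unfolding pivots_zero_def using assms by auto
qed

lemma rigid_cong: "(\<And>k. k < M \<Longrightarrow> P k = P' k) \<Longrightarrow> rigid n P M \<Longrightarrow> rigid n P' M"
  unfolding rigid_def using pivots_zero_cong by metis

lemma supported_in_rot_seq: "pivots_in n P t \<Longrightarrow> supported_in n X \<Longrightarrow> supported_in n (rot_seq P \<phi> w X t)"
proof (induction t)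
  case (Suc t)
  then have "P t \<in> pairs n" "pivots_in n P t" by (auto simp: pivots_in_def)
  then show ?case using Suc supported_in_rot_conj pairs_range by simp
qed simp

lemma zero_diag_rot_conj:
  assumes "i \<noteq> j" "zero_diag X" "X i j = 0" "X j i = 0"
  shows "zero_diag (rot_conj i j \<phi> w X)"
  using rot_conj_pivot_block_zero[OF assms(1) _ _ assms(3,4)] rot_conj_outside[of _ i j _ \<phi> w X] assms(2)
  unfolding zero_diag_def by metis

lemma zero_diag_rot_seq:
  "pivots_in n P t \<Longrightarrow> zero_diag X \<Longrightarrow> pivots_zero P \<phi> w X t \<Longrightarrow> zero_diag (rot_seq P \<phi> w X t)"
proof (induction t)
  case (Suc t)
  then have "P t \<in> pairs n" "pivots_in n P t" "pivots_zero P \<phi> w X t" 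
    by (auto simp: pivots_in_def pivots_zero_def)
  moreover have "rot_seq P \<phi> w X t (fst (P t)) (snd (P t)) = 0" "rot_seq P \<phi> w X t (snd (P t)) (fst (P t)) = 0"
    using Suc.prems(3) by (auto simp: pivots_zero_def)
  ultimately show ?case using Suc zero_diag_rot_conj pairs_neq by simp
qed simp

lemma rot_seq_eq_zero_imp:
  assumes "pivots_in n P t" "adm_angles \<phi> w" "rot_seq P \<phi> w X t = (\<lambda>_ _. 0)"
  shows "X = (\<lambda>_ _. 0)"
  using assms
proof (induction t)
  case (Suc t)
  then have p: "P t \<in> pairs n" and "pivots_in n P t" by (auto simp: pivots_in_def)
  have "cmod (w t) = 1" using Suc.prems(2) by (auto simp: adm_angles_def)
  then have "rot_seq P \<phi> w X t = rot_conj (fst (P t)) (snd (P t)) (- \<phi> t) (w t) (rot_seq P \<phi> w X (Suc t))"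
    using rot_conj_inverse pairs_neq[OF p] by simp
  then show ?case using Suc \<open>pivots_in n P t\<close> by simp
qed simp

text \<open>The rotations before the segment keep the matrix admissible and are invertible.\<close>

lemma rigid_extend:
  assumes rigid: "rigid n (\<lambda>k. P (m + k)) M" and piv: "pivots_in n P m" and le: "m + M \<le> M'"
  shows "rigid n P M'"
  unfolding rigid_def
proof (intro allI impI)
  fix X \<phi> w assume supp: "supported_in n X" and zdiag: "zero_diag X" and adm: "adm_angles \<phi> w"
    and zero: "pivots_zero P \<phi> w X M'"
  have "pivots_zero P \<phi> w X (m + M)" using zero le pivots_zero_mono by blast
  then have p1: "pivots_zero P \<phi> w X m"
    and p2: "pivots_zero (\<lambda>k. P (m + k)) (\<lambda>k. \<phi> (m + k)) (\<lambda>k. w (m + k)) (rot_seq P \<phi> w X m) M"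
    using pivots_zero_add by blast+
  have "supported_in n (rot_seq P \<phi> w X m)" using supported_in_rot_seq piv supp by blast
  moreover have "zero_diag (rot_seq P \<phi> w X m)" using zero_diag_rot_seq piv zdiag p1 by blast
  moreover have "adm_angles (\<lambda>k. \<phi> (m + k)) (\<lambda>k. w (m + k))" using adm by (auto simp: adm_angles_def)
  ultimately have "rot_seq P \<phi> w X m = (\<lambda>_ _. 0)" using rigid p2 unfolding rigid_def by blast
  then show "X = (\<lambda>_ _. 0)" using rot_seq_eq_zero_imp piv adm by blast
qed

lemma rigid_list_extend:
  assumes "rigid_list n ps" "set xs \<subseteq> pairs n" "set ys \<subseteq> pairs n"
  shows "rigid_list n (xs @ ps @ ys)"
proof -
  have "rigid n (\<lambda>k. (xs @ ps @ ys) ! (length xs + k)) (length ps)"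
    using assms(1) unfolding rigid_list_def by (auto intro: rigid_cong simp: nth_append)
  moreover have "pivots_in n (nth (xs @ ps @ ys)) (length xs)"
    using assms by (intro pivots_in_nth) (auto simp: rigid_list_def)
  ultimately have "rigid n (nth (xs @ ps @ ys)) (length (xs @ ps @ ys))"
    by (rule rigid_extend) simp
  then show ?thesis using assms by (simp add: rigid_list_def)
qed

text \<open>Running the reversed sequence with negated angles undoes the rotations one by one.\<close>

lemma rot_seq_reverse:
  assumes "pivots_in n P M" "\<forall>k. cmod (w k) = 1" "t \<le> M"
  shows "rot_seq P (\<lambda>k. - \<phi> (M - Suc k)) (\<lambda>k. w (M - Suc k)) (rot_seq (\<lambda>k. P (M - Suc k)) \<phi> w X M) t
    = rot_seq (\<lambda>k. P (M - Suc k)) \<phi> w X (M - t)"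
  using assms(3)
proof (induction t)
  case (Suc t)
  define m where "m = M - Suc t"
  have M_t: "M - t = Suc m" and P_m: "P (M - Suc m) = P t" using Suc.prems by (simp_all add: m_def)
  have p: "P t \<in> pairs n" using assms(1) Suc.prems by (simp add: pivots_in_def)
  show ?case
    using Suc rot_conj_inverse[OF pairs_neq[OF p] assms(2)[rule_format, of m]]
    by (simp add: M_t P_m flip: m_def)
qed simp

lemma rigid_rev:
  assumes rigid: "rigid n P M" and piv: "pivots_in n P M"
  shows "rigid n (\<lambda>k. P (M - Suc k)) M"
  unfolding rigid_def
proof (intro allI impI)
  fix X \<phi> w assume supp: "supported_in n X" and zdiag: "zero_diag X" and adm: "adm_angles \<phi> w"
    and zero: "pivots_zero (\<lambda>k. P (M - Suc k)) \<phi> w X M"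
  let ?P' = "\<lambda>k. P (M - Suc k)"
  define Z where "Z = rot_seq ?P' \<phi> w X"
  define \<phi>' where "\<phi>' = (\<lambda>k. - \<phi> (M - Suc k))"
  define w' where "w' = (\<lambda>k. w (M - Suc k))"
  have piv': "pivots_in n ?P' M" using piv by (auto simp: pivots_in_def)
  have undo: "rot_seq P \<phi>' w' (Z M) t = Z (M - t)" if "t \<le> M" for t
    using rot_seq_reverse[OF piv _ that] adm by (simp add: adm_angles_def Z_def \<phi>'_def w'_def)
  have zdiag_Z: "zero_diag (Z k)" if "k \<le> M" for k
    using zero_diag_rot_seq[OF pivots_in_mono[OF piv' that] zdiag pivots_zero_mono[OF zero that]]
    by (simp add: Z_def)
  have "pivots_zero P \<phi>' w' (Z M) M"
    unfolding pivots_zero_def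
  proof (intro allI impI)
    fix k assume k: "k < M"
    define m where "m = M - Suc k"
    have m: "m < M" "M - k = Suc m" "?P' m = P k" using k by (auto simp: m_def)
    have p: "P k \<in> pairs n" using piv k by (simp add: pivots_in_def)
    have "Z m (fst (P k)) (snd (P k)) = 0" "Z m (snd (P k)) (fst (P k)) = 0"
      using zero m by (auto simp: pivots_zero_def Z_def)
    moreover have "Z m (fst (P k)) (fst (P k)) = 0" "Z m (snd (P k)) (snd (P k)) = 0"
      using zdiag_Z[of m] m by (auto simp: zero_diag_def)
    moreover have "rot_seq P \<phi>' w' (Z M) k = rot_conj (fst (P k)) (snd (P k)) (\<phi> m) (w m) (Z m)"
      using undo[of k] k m by (simp add: Z_def)
    ultimately show "rot_seq P \<phi>' w' (Z M) k (fst (P k)) (snd (P k)) = 0 \<and>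
        rot_seq P \<phi>' w' (Z M) k (snd (P k)) (fst (P k)) = 0"
      using rot_conj_pivot_block_zero[OF pairs_neq[OF p]] by simp
  qed
  moreover have "supported_in n (Z M)" using supported_in_rot_seq[OF piv' supp] by (simp add: Z_def)
  moreover have "zero_diag (Z M)" using zdiag_Z by simp
  moreover have "adm_angles \<phi>' w'" using adm by (auto simp: adm_angles_def \<phi>'_def w'_def)
  ultimately have "Z M = (\<lambda>_ _. 0)" using rigid unfolding rigid_def by blast
  then show "X = (\<lambda>_ _. 0)" using rot_seq_eq_zero_imp[OF piv' adm] by (simp add: Z_def)
qed

lemma rigid_list_rev: "rigid_list n ps \<Longrightarrow> rigid_list n (rev ps)"
  unfolding rigid_list_def
  using rigid_rev[of n "nth ps" "length ps"] pivots_in_nth[of ps n "length ps"]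
  by (auto intro: rigid_cong simp: rev_nth)

text \<open>Rotations in disjoint planes commute, so an admissible transposition of two adjacent
  pivots is compensated by exchanging the two corresponding angles.\<close>

lemma rot_seq_swap_adjacent:
  assumes disj: "{fst (P p), snd (P p)} \<inter> {fst (P (Suc p)), snd (P (Suc p))} = {}" and t: "t \<noteq> Suc p"
  shows "rot_seq P (\<phi>(p := \<phi> (Suc p), Suc p := \<phi> p)) (w(p := w (Suc p), Suc p := w p)) X t
    = rot_seq (P(p := P (Suc p), Suc p := P p)) \<phi> w X t"
proof -
  define P' where "P' = P(p := P (Suc p), Suc p := P p)"
  define \<phi>' where "\<phi>' = \<phi>(p := \<phi> (Suc p), Suc p := \<phi> p)"
  define w' where "w' = w(p := w (Suc p), Suc p := w p)"
  have upd: "P' p = P (Suc p)" "P' (Suc p) = P p" "\<phi>' p = \<phi> (Suc p)" "\<phi>' (Suc p) = \<phi> p"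
    "w' p = w (Suc p)" "w' (Suc p) = w p"
    by (simp_all add: P'_def \<phi>'_def w'_def)
  have other: "P' k = P k" "\<phi>' k = \<phi> k" "w' k = w k" if "k \<noteq> p" "k \<noteq> Suc p" for k
    using that by (simp_all add: P'_def \<phi>'_def w'_def)
  have before: "rot_seq P \<phi>' w' X t = rot_seq P' \<phi> w X t" if "t \<le> p" for t
    using that by (intro rot_seq_cong) (simp add: other)
  have "rot_seq P \<phi>' w' X (Suc (Suc p)) = rot_conj (fst (P (Suc p))) (snd (P (Suc p))) (\<phi> p) (w p)
      (rot_conj (fst (P p)) (snd (P p)) (\<phi> (Suc p)) (w (Suc p)) (rot_seq P \<phi>' w' X p))"
    by (simp add: upd)
  also have "\<dots> = rot_conj (fst (P p)) (snd (P p)) (\<phi> (Suc p)) (w (Suc p))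
      (rot_conj (fst (P (Suc p))) (snd (P (Suc p))) (\<phi> p) (w p) (rot_seq P \<phi>' w' X p))"
    using disj by (intro rot_conj_commute) auto
  also have "\<dots> = rot_seq P' \<phi> w X (Suc (Suc p))"
    using before[of p] by (simp add: upd)
  finally have pair: "rot_seq P \<phi>' w' X (Suc (Suc p)) = rot_seq P' \<phi> w X (Suc (Suc p))" .
  have after: "rot_seq P \<phi>' w' X (m + Suc (Suc p)) = rot_seq P' \<phi> w X (m + Suc (Suc p))" for m
  proof (induction m)
    case 0 then show ?case using pair by simp
  next
    case (Suc m)
    have "m + Suc (Suc p) \<noteq> p" "m + Suc (Suc p) \<noteq> Suc p" by auto
    then show ?case using Suc by (simp add: other)
  qed
  have "rot_seq P \<phi>' w' X t = rot_seq P' \<phi> w X t"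
  proof (cases "t \<le> p")
    case False
    then have "t = (t - Suc (Suc p)) + Suc (Suc p)" using t by simp
    then show ?thesis using after by metis
  qed (rule before)
  then show ?thesis unfolding P'_def \<phi>'_def w'_def .
qed

lemma rigid_swap_adjacent:
  assumes rigid: "rigid n P M" and p: "Suc p < M"
    and disj: "{fst (P p), snd (P p)} \<inter> {fst (P (Suc p)), snd (P (Suc p))} = {}"
  shows "rigid n (P(p := P (Suc p), Suc p := P p)) M"
  unfolding rigid_def
proof (intro allI impI)
  let ?P' = "P(p := P (Suc p), Suc p := P p)"
  fix X \<phi> w assume supp: "supported_in n X" and zdiag: "zero_diag X" and adm: "adm_angles \<phi> w"
    and zero: "pivots_zero ?P' \<phi> w X M"
  define \<phi>' where "\<phi>' = \<phi>(p := \<phi> (Suc p), Suc p := \<phi> p)"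
  define w' where "w' = w(p := w (Suc p), Suc p := w p)"
  have same: "rot_seq P \<phi>' w' X t = rot_seq ?P' \<phi> w X t" if "t \<noteq> Suc p" for t
    using rot_seq_swap_adjacent[OF disj that] by (simp add: \<phi>'_def w'_def)
  have zero': "rot_seq ?P' \<phi> w X k (fst (?P' k)) (snd (?P' k)) = 0 \<and>
      rot_seq ?P' \<phi> w X k (snd (?P' k)) (fst (?P' k)) = 0" if "k < M" for k
    using zero that by (simp add: pivots_zero_def)
  have step: "rot_seq Q \<psi> v X (Suc p) r s = rot_seq Q \<psi> v X p r s"
    if "{r, s} \<subseteq> {fst (P p), snd (P p)} \<and> Q p = P (Suc p) \<or> {r, s} \<subseteq> {fst (P (Suc p)), snd (P (Suc p))} \<and> Q p = P p"
    for Q \<psi> v r s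
    using that disj by (auto intro!: rot_conj_outside)
  have "pivots_zero P \<phi>' w' X M"
    unfolding pivots_zero_def
  proof (intro allI impI)
    fix k assume k: "k < M"
    consider "k = p" | "k = Suc p" | "k \<noteq> p" "k \<noteq> Suc p" by blast
    then show "rot_seq P \<phi>' w' X k (fst (P k)) (snd (P k)) = 0 \<and>
        rot_seq P \<phi>' w' X k (snd (P k)) (fst (P k)) = 0"
    proof cases
      case 1
      then show ?thesis using zero'[OF p] same[of p] step[where Q = ?P' and \<psi> = \<phi> and v = w] by simp
    next
      case 2
      then show ?thesis using zero'[of p] p same[of p] step[where Q = P and \<psi> = \<phi>' and v = w'] by simp
    next
      case 3
      then show ?thesis using zero'[OF k] same[of k] by simp
    qed
  qed
  moreover have "adm_angles \<phi>' w'" using adm by (auto simp: adm_angles_def \<phi>'_def w'_def)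
  ultimately show "X = (\<lambda>_ _. 0)" using rigid supp zdiag unfolding rigid_def by blast
qed

definition relabel_pair :: "(nat \<Rightarrow> nat) \<Rightarrow> nat \<times> nat \<Rightarrow> nat \<times> nat" where
  "relabel_pair q p = (min (q (fst p)) (q (snd p)), max (q (fst p)) (q (snd p)))"

definition relabel :: "(nat \<Rightarrow> nat) \<Rightarrow> nat \<Rightarrow> cmatrix \<Rightarrow> cmatrix" where
  "relabel q n X = (\<lambda>r s. if r \<in> {1..n} \<and> s \<in> {1..n} then X (q r) (q s) else 0)"

lemma supported_in_relabel: "supported_in n (relabel q n X)"
  by (auto simp: supported_in_def relabel_def)

lemma relabel_rot_conj:
  assumes q: "bij_betw q {1..n} {1..n}" and ij: "i \<in> {1..n}" "j \<in> {1..n}" "i \<noteq> j"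
  shows "relabel q n (rot_conj (q i) (q j) \<psi> v Y) = rot_conj i j \<psi> v (relabel q n Y)"
proof (intro ext)
  fix r s
  show "relabel q n (rot_conj (q i) (q j) \<psi> v Y) r s = rot_conj i j \<psi> v (relabel q n Y) r s"
  proof (cases "r \<in> {1..n} \<and> s \<in> {1..n}")
    case True
    have inj: "\<And>x y. x \<in> {1..n} \<Longrightarrow> y \<in> {1..n} \<Longrightarrow> (q x = q y) = (x = y)"
      using q by (metis bij_betw_def inj_on_def)
    have "(q r = q i) = (r = i)" "(q r = q j) = (r = j)" "(q s = q i) = (s = i)" "(q s = q j) = (s = j)"
      using inj True ij by auto
    then show ?thesis
      using True ij by (simp add: rot_conj_def rot_left_def rot_right_def relabel_def)
  next
    case False
    then consider "r \<notin> {1..n}" "r \<noteq> i" "r \<noteq> j" | "s \<notin> {1..n}" "s \<noteq> i" "s \<noteq> j"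
      using ij by blast
    then show ?thesis
    proof cases
      case 1
      have "relabel q n Y r t = 0" "relabel q n (rot_conj (q i) (q j) \<psi> v Y) r t = 0" for t
        using 1 by (auto simp: relabel_def)
      then show ?thesis using 1 by (simp add: rot_conj_def rot_left_def rot_right_def)
    next
      case 2
      have "relabel q n Y t s = 0" "relabel q n (rot_conj (q i) (q j) \<psi> v Y) t s = 0" for t
        using 2 by (auto simp: relabel_def)
      then show ?thesis using 2 by (simp add: rot_conj_def rot_left_def rot_right_def)
    qed
  qed
qed

lemma relabel_rot_conj_relabel_pair:
  assumes q: "bij_betw q {1..n} {1..n}" and p: "p \<in> pairs n"
  shows "relabel q n (rot_conj (fst (relabel_pair q p)) (snd (relabel_pair q p)) \<phi> w Y) =
    rot_conj (fst p) (snd p) (if q (fst p) < q (snd p) then \<phi> else - \<phi>)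
       (if q (fst p) < q (snd p) then w else cnj w) (relabel q n Y)"
proof -
  have ij: "fst p \<in> {1..n}" "snd p \<in> {1..n}" "fst p \<noteq> snd p" using p by (auto simp: pairs_def)
  have ne: "q (fst p) \<noteq> q (snd p)" using q ij by (metis bij_betw_def inj_on_def)
  show ?thesis
  proof (cases "q (fst p) < q (snd p)")
    case True
    then show ?thesis using relabel_rot_conj[OF q ij] by (simp add: relabel_pair_def)
  next
    case False
    then have "relabel_pair q p = (q (snd p), q (fst p))" using ne by (auto simp: relabel_pair_def)
    then show ?thesis using False relabel_rot_conj[OF q ij] rot_conj_swap[OF ne] by simp
  qed
qed

lemma relabel_rot_seq:
  assumes q: "bij_betw q {1..n} {1..n}" and piv: "pivots_in n P t"
  shows "relabel q n (rot_seq (\<lambda>k. relabel_pair q (P k)) \<phi> w X t) =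
    rot_seq P (\<lambda>k. if q (fst (P k)) < q (snd (P k)) then \<phi> k else - \<phi> k)
      (\<lambda>k. if q (fst (P k)) < q (snd (P k)) then w k else cnj (w k)) (relabel q n X) t"
  using piv
proof (induction t)
  case (Suc t)
  then have "P t \<in> pairs n" "pivots_in n P t" by (auto simp: pivots_in_def)
  with Suc.IH show ?case by (simp add: relabel_rot_conj_relabel_pair[OF q])
qed simp

lemma relabel_id_rot_seq:
  assumes piv: "pivots_in n P t"
  shows "relabel (\<lambda>a. a) n (rot_seq P \<phi> w X t) = rot_seq P \<phi> w (relabel (\<lambda>a. a) n X) t"
proof -
  have P: "relabel_pair (\<lambda>a. a) (P k) = P k" "fst (P k) < snd (P k)" if "k < t" for k
    using piv that by (auto simp: pivots_in_def pairs_def relabel_pair_def)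
  have "rot_seq (\<lambda>k. relabel_pair (\<lambda>a. a) (P k)) \<phi> w X t = rot_seq P \<phi> w X t"
    by (rule rot_seq_cong) (simp add: P)
  moreover have "rot_seq P (\<lambda>k. if fst (P k) < snd (P k) then \<phi> k else - \<phi> k)
      (\<lambda>k. if fst (P k) < snd (P k) then w k else cnj (w k)) Y t = rot_seq P \<phi> w Y t" for Y
    by (rule rot_seq_cong) (simp add: P)
  ultimately show ?thesis
    using relabel_rot_seq[OF _ piv, of "\<lambda>a. a" \<phi> w X] by (simp add: bij_betw_def)
qed

lemma relabel_pair_in_pairs:
  assumes q: "bij_betw q {1..n} {1..n}" and p: "p \<in> pairs n"
  shows "relabel_pair q p \<in> pairs n"
proof -
  obtain i j where ij: "p = (i, j)" "i < j" "i \<in> {1..n}" "j \<in> {1..n}" using p by (auto simp: pairs_def)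
  have "q i \<in> {1..n}" "q j \<in> {1..n}" using q ij by (auto simp: bij_betw_def)
  moreover have "q i \<noteq> q j" using q ij by (metis bij_betw_def inj_on_def less_irrefl)
  ultimately show ?thesis using ij by (auto simp: relabel_pair_def pairs_def min_def max_def)
qed

lemma relabel_pair_inv_into:
  assumes q: "bij_betw q {1..n} {1..n}" and p: "p \<in> pairs n"
  shows "relabel_pair (inv_into {1..n} q) (relabel_pair q p) = p"
proof -
  obtain i j where ij: "p = (i, j)" "i < j" "i \<in> {1..n}" "j \<in> {1..n}" using p by (auto simp: pairs_def)
  have "inv_into {1..n} q (q i) = i" "inv_into {1..n} q (q j) = j"
    using q ij by (auto simp: bij_betw_def inv_into_f_f)
  then show ?thesis using ij by (auto simp: relabel_pair_def min_def max_def)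
qed

lemma relabel_eq_zero_imp:
  assumes q: "bij_betw q {1..n} {1..n}" and supp: "supported_in n X" and zero: "relabel q n X = (\<lambda>_ _. 0)"
  shows "X = (\<lambda>_ _. 0)"
proof (intro ext)
  fix r s
  show "X r s = 0"
  proof (cases "r \<in> {1..n} \<and> s \<in> {1..n}")
    case True
    then obtain r0 s0 where "r0 \<in> {1..n}" "s0 \<in> {1..n}" "r = q r0" "s = q s0"
      using q by (metis bij_betw_def imageE)
    then show ?thesis using fun_cong[OF fun_cong[OF zero, of r0], of s0] by (simp add: relabel_def)
  qed (use supp in \<open>auto simp: supported_in_def\<close>)
qed

lemma rigid_relabel:
  assumes rigid: "rigid n P M" and piv: "pivots_in n P M" and q: "bij_betw q {1..n} {1..n}"
  shows "rigid n (\<lambda>k. relabel_pair q (P k)) M"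
  unfolding rigid_def
proof (intro allI impI)
  fix X \<phi> w assume supp: "supported_in n X" and zdiag: "zero_diag X" and adm: "adm_angles \<phi> w"
    and zero: "pivots_zero (\<lambda>k. relabel_pair q (P k)) \<phi> w X M"
  define \<phi>' where "\<phi>' = (\<lambda>k. if q (fst (P k)) < q (snd (P k)) then \<phi> k else - \<phi> k)"
  define w' where "w' = (\<lambda>k. if q (fst (P k)) < q (snd (P k)) then w k else cnj (w k))"
  have "pivots_zero P \<phi>' w' (relabel q n X) M"
    unfolding pivots_zero_def
  proof (intro allI impI)
    fix k assume k: "k < M"
    have pk: "P k \<in> pairs n" using piv k by (auto simp: pivots_in_def)
    have "relabel_pair q (P k) = (q (fst (P k)), q (snd (P k))) \<or>
        relabel_pair q (P k) = (q (snd (P k)), q (fst (P k)))"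
      by (auto simp: relabel_pair_def min_def max_def)
    then have "rot_seq (\<lambda>k. relabel_pair q (P k)) \<phi> w X k (q (fst (P k))) (q (snd (P k))) = 0 \<and>
       rot_seq (\<lambda>k. relabel_pair q (P k)) \<phi> w X k (q (snd (P k))) (q (fst (P k))) = 0"
      using zero k by (auto simp: pivots_zero_def)
    moreover have "rot_seq P \<phi>' w' (relabel q n X) k = relabel q n (rot_seq (\<lambda>k. relabel_pair q (P k)) \<phi> w X k)"
      using relabel_rot_seq[OF q pivots_in_mono[OF piv], of k \<phi> w X] k by (simp add: \<phi>'_def w'_def)
    ultimately show "rot_seq P \<phi>' w' (relabel q n X) k (fst (P k)) (snd (P k)) = 0 \<and>
        rot_seq P \<phi>' w' (relabel q n X) k (snd (P k)) (fst (P k)) = 0"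
      using pk by (auto simp: relabel_def pairs_def)
  qed
  moreover have "zero_diag (relabel q n X)" using zdiag by (auto simp: zero_diag_def relabel_def)
  moreover have "adm_angles \<phi>' w'" using adm by (auto simp: adm_angles_def \<phi>'_def w'_def)
  ultimately have "relabel q n X = (\<lambda>_ _. 0)"
    using rigid supported_in_relabel unfolding rigid_def by blast
  then show "X = (\<lambda>_ _. 0)" using relabel_eq_zero_imp[OF q supp] by blast
qed

lemma rigid_list_relabel:
  assumes rigid: "rigid_list n ps" and q: "bij_betw q {1..n} {1..n}"
  shows "rigid_list n (map (relabel_pair q) ps)"
proof -
  have "rigid n (\<lambda>k. relabel_pair q (ps ! k)) (length ps)"
    using rigid_relabel rigid q pivots_in_nth[of ps n "length ps"] by (auto simp: rigid_list_def)
  then have "rigid n (nth (map (relabel_pair q) ps)) (length ps)" by (rule rigid_cong[rotated]) simp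
  moreover have "set (map (relabel_pair q) ps) \<subseteq> pairs n"
    using rigid q relabel_pair_in_pairs by (auto simp: rigid_list_def)
  ultimately show ?thesis by (simp add: rigid_list_def)
qed

lemma rigid_list_relabel_inverse:
  assumes rigid: "rigid_list n (map (relabel_pair q) ps)" and q: "bij_betw q {1..n} {1..n}"
    and ps: "set ps \<subseteq> pairs n"
  shows "rigid_list n ps"
proof -
  have "map (relabel_pair (inv_into {1..n} q)) (map (relabel_pair q) ps) = ps"
    using ps relabel_pair_inv_into[OF q] by (induction ps) auto
  then show ?thesis using rigid_list_relabel[OF rigid bij_betw_inv_into[OF q]] by simp
qed

section \<open>Rigidity yields a uniform contraction\<close>

lemma jacobi_step_off_eq_rot_conj:
  assumes "i \<noteq> j" "zero_diag X" "X i j = 0" "X j i = 0"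
  shows "jacobi_step_off i j \<phi> w X = rot_conj i j \<phi> w X"
proof (intro ext)
  fix r s
  have "X i i = 0" "X j j = 0" using assms(2) by (auto simp: zero_diag_def)
  note block = rot_conj_pivot_block_zero[OF assms(1) this assms(3,4), of \<phi> w]
  consider "r = s" "r = i \<or> r = j" | "r = s" "r \<noteq> i" "r \<noteq> j" | "r = i" "s = j" | "r = j" "s = i"
    | "r \<noteq> s" "\<not> (r = i \<and> s = j)" "\<not> (r = j \<and> s = i)" by blast
  then show "jacobi_step_off i j \<phi> w X r s = rot_conj i j \<phi> w X r s"
  proof cases
    case 2
    then show ?thesis
      using rot_conj_outside[of r i j r \<phi> w X] assms(2) by (simp add: jacobi_step_off_def zero_diag_def)
  qed (use block in \<open>auto simp: jacobi_step_off_def\<close>)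
qed

lemma jacobi_off_eq_rot_seq:
  assumes "pivots_in n P M" "zero_diag X" "\<forall>t<M. pivot_loss P \<phi> w X t = 0" "k \<le> M"
  shows "jacobi_off P \<phi> w X k = rot_seq P \<phi> w X k"
  using assms(4)
proof (induction k)
  case (Suc k)
  have p: "P k \<in> pairs n" using assms(1) Suc.prems by (simp add: pivots_in_def)
  have z: "jacobi_off P \<phi> w X k (fst (P k)) (snd (P k)) = 0" "jacobi_off P \<phi> w X k (snd (P k)) (fst (P k)) = 0"
    using assms(3) Suc.prems by (auto simp: pivot_loss_def add_nonneg_eq_0_iff)
  show ?case
    using jacobi_step_off_eq_rot_conj[OF pairs_neq[OF p] zero_diag_jacobi_off[OF assms(2)] z] Suc by simp
qed simp

text \<open>If the off-norm does not decrease, no pivot entry carried any weight, so every Jacobi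
  step was a pure rotation.\<close>

lemma pivots_zero_if_off2_not_decreased:
  assumes "pivots_in n P M" "adm_angles \<phi> w" "zero_diag X" "off2 n (jacobi_off P \<phi> w X M) \<ge> off2 n X"
  shows "pivots_zero P \<phi> w X M"
proof -
  have "(\<Sum>t<M. pivot_loss P \<phi> w X t) \<le> 0" using off2_jacobi_off[OF assms(1-3)] assms(4) by simp
  then have loss: "\<forall>t<M. pivot_loss P \<phi> w X t = 0"
    using sum_nonneg_eq_0_iff[of "{..<M}" "pivot_loss P \<phi> w X"] pivot_loss_nonneg
    by (metis antisym finite_lessThan lessThan_iff sum_nonneg)
  show ?thesis unfolding pivots_zero_def
  proof (intro allI impI)
    fix k assume k: "k < M"
    have "jacobi_off P \<phi> w X k = rot_seq P \<phi> w X k"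
      using jacobi_off_eq_rot_seq[OF assms(1,3) loss] k by simp
    then show "rot_seq P \<phi> w X k (fst (P k)) (snd (P k)) = 0 \<and> rot_seq P \<phi> w X k (snd (P k)) (fst (P k)) = 0"
      using loss k by (auto simp: pivot_loss_def add_nonneg_eq_0_iff)
  qed
qed

lemma off2_zero [simp]: "off2 n (\<lambda>_ _. 0) = 0"
  unfolding off2_def by (intro sum.neutral ballI) simp

lemma off2_jacobi_off_less:
  assumes "rigid n P M" "pivots_in n P M" "supported_in n X" "zero_diag X" "adm_angles \<phi> w"
    "off2 n X > 0"
  shows "off2 n (jacobi_off P \<phi> w X M) < off2 n X"
proof (rule ccontr)
  assume "\<not> ?thesis"
  then have "pivots_zero P \<phi> w X M"
    using pivots_zero_if_off2_not_decreased[OF assms(2,5,4)] by simp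
  then have "X = (\<lambda>_ _. 0)" using assms(1,3-5) unfolding rigid_def by blast
  then show False using assms(6) by simp
qed

type_synonym jacobi_param = "cmatrix \<times> (nat \<Rightarrow> real) \<times> (nat \<Rightarrow> complex)"

lemma continuous_on_if_const:
  "continuous_on S f \<Longrightarrow> continuous_on S g \<Longrightarrow> continuous_on S (\<lambda>x. if b then f x else g x)"
  by (cases b) auto

lemma continuous_on_param_entry: "continuous_on UNIV (\<lambda>p::jacobi_param. fst p r s)"
proof -
  have "continuous_on UNIV (\<lambda>p::jacobi_param. fst p r)"
    by (rule continuous_on_product_then_coordinatewise) (intro continuous_intros)
  then show ?thesis by (rule continuous_on_product_then_coordinatewise)
qed

lemma continuous_on_param_angle: "continuous_on UNIV (\<lambda>p::jacobi_param. fst (snd p) k)"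
  by (rule continuous_on_product_then_coordinatewise) (intro continuous_intros)

lemma continuous_on_param_phase: "continuous_on UNIV (\<lambda>p::jacobi_param. snd (snd p) k)"
  by (rule continuous_on_product_then_coordinatewise) (intro continuous_intros)

lemma continuous_on_rot_right:
  assumes "\<And>a b. continuous_on S (\<lambda>p. Y p a b)" "continuous_on S c" "continuous_on S s" "continuous_on S w"
  shows "continuous_on S (\<lambda>p. rot_right i j (c p) (s p) (w p) (Y p) r t)"
proof -
  consider "t = i" | "t \<noteq> i" "t = j" | "t \<noteq> i" "t \<noteq> j" by blast
  then show ?thesis
    by cases (simp_all add: rot_right_def assms, (intro continuous_intros; simp add: assms)+)
qed

lemma continuous_on_rot_left:
  assumes "\<And>a b. continuous_on S (\<lambda>p. Y p a b)" "continuous_on S c" "continuous_on S s" "continuous_on S w"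
  shows "continuous_on S (\<lambda>p. rot_left i j (c p) (s p) (w p) (Y p) r t)"
proof -
  consider "r = i" | "r \<noteq> i" "r = j" | "r \<noteq> i" "r \<noteq> j" by blast
  then show ?thesis
    by cases (simp_all add: rot_left_def assms, (intro continuous_intros; simp add: assms)+)
qed

lemma continuous_on_rot_conj:
  assumes "\<And>a b. continuous_on S (\<lambda>p. Y p a b)" "continuous_on S \<phi>" "continuous_on S w"
  shows "continuous_on S (\<lambda>p. rot_conj i j (\<phi> p) (w p) (Y p) r t)"
proof -
  have "continuous_on (\<phi> ` S) cos" "continuous_on (\<phi> ` S) sin"
    by (auto intro!: continuous_intros continuous_on_subset[of UNIV])
  then have "continuous_on S (cos \<circ> \<phi>)" "continuous_on S (sin \<circ> \<phi>)"
    using continuous_on_compose[OF assms(2)] by auto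
  then have c: "continuous_on S (\<lambda>p. complex_of_real (cos (\<phi> p)))"
    and s: "continuous_on S (\<lambda>p. complex_of_real (sin (\<phi> p)))"
    by (auto intro!: continuous_on_of_real simp: comp_def)
  show ?thesis unfolding rot_conj_def
    by (rule continuous_on_rot_left[OF continuous_on_rot_right[OF assms(1) c s assms(3)] c s assms(3)])
qed

lemma continuous_on_jacobi_off:
  "continuous_on UNIV (\<lambda>p::jacobi_param. jacobi_off P (fst (snd p)) (snd (snd p)) (fst p) k r s)"
proof (induction k arbitrary: r s)
  case 0 then show ?case using continuous_on_param_entry by simp
next
  case (Suc k)
  show ?case
    unfolding jacobi_off.simps jacobi_step_off_def
    by (rule continuous_on_if_const[OF continuous_on_const
        continuous_on_rot_conj[OF Suc continuous_on_param_angle continuous_on_param_phase]])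
qed

lemma continuous_on_off2:
  "(\<And>r s. continuous_on S (\<lambda>p. X p r s)) \<Longrightarrow> continuous_on S (\<lambda>p. off2 n (X p))"
  unfolding off2_def
  by (intro continuous_on_sum continuous_on_if_const continuous_on_const continuous_on_power
      continuous_on_norm)

lemma compact_PiE_UNIV:
  assumes "\<And>i. compact (S i)"
  shows "compact (PiE UNIV S :: ('a \<Rightarrow> 'b::topological_space) set)"
proof -
  have "compactin (product_topology (\<lambda>i. euclidean) UNIV) (PiE UNIV S)"
    using assms by (simp add: compactin_PiE)
  then show ?thesis by (simp add: euclidean_product_topology)
qed

definition normalized_params :: "nat \<Rightarrow> jacobi_param set" where
  "normalized_params n = {(X, \<phi>, w). supported_in n X \<and> zero_diag X \<and> off2 n X = 1 \<and> adm_angles \<phi> w}"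

definition param_box :: "jacobi_param set" where
  "param_box = (PiE UNIV (\<lambda>r. PiE UNIV (\<lambda>s. cball (0::complex) 1)) :: cmatrix set)
    \<times> (PiE UNIV (\<lambda>k. {-(pi/4)..pi/4}) \<times> PiE UNIV (\<lambda>k. cball (0::complex) 1))"

definition normalized_constraints :: "nat \<Rightarrow> jacobi_param set" where
  "normalized_constraints n = {p. (\<forall>r s. (if r \<in> {1..n} \<and> s \<in> {1..n} then 0 else fst p r s) = 0) \<and>
     (\<forall>r. fst p r r = 0) \<and> off2 n (fst p) = 1 \<and> (\<forall>k. cmod (snd (snd p) k) = 1)}"

lemma normalized_params_eq: "normalized_params n = param_box \<inter> normalized_constraints n"
proof (intro equalityI subsetI)
  fix p assume "p \<in> normalized_params n"
  then obtain X \<phi> w where p: "p = (X, \<phi>, w)" and supp: "supported_in n X" and zdiag: "zero_diag X"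
    and one: "off2 n X = 1" and adm: "adm_angles \<phi> w"
    by (auto simp: normalized_params_def)
  have "X r s \<in> cball 0 1" for r s
  proof (cases "r \<in> {1..n} \<and> s \<in> {1..n} \<and> r \<noteq> s")
    case True
    then have "(cmod (X r s))\<^sup>2 \<le> 1" using entry_norm2_le_off2[of r n s X] one by simp
    then show ?thesis by (simp add: power_le_one_iff)
  next
    case False
    then have "X r s = 0" using supp zdiag by (auto simp: supported_in_def zero_diag_def)
    then show ?thesis by simp
  qed
  moreover have "\<phi> k \<in> {-(pi/4)..pi/4}" for k
  proof -
    have "\<bar>\<phi> k\<bar> \<le> pi / 4" using adm by (simp add: adm_angles_def)
    then show ?thesis by (simp add: abs_le_iff) linarith
  qed
  moreover have "w k \<in> cball 0 1" for k
    using adm by (simp add: adm_angles_def)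
  moreover have "p \<in> normalized_constraints n"
    using p supp zdiag one adm by (auto simp: normalized_constraints_def supported_in_def zero_diag_def adm_angles_def)
  ultimately show "p \<in> param_box \<inter> normalized_constraints n" using p by (simp add: param_box_def PiE_iff)
next
  fix p assume pBC: "p \<in> param_box \<inter> normalized_constraints n"
  obtain X \<phi> w where p: "p = (X, \<phi>, w)" by (cases p) auto
  have "supported_in n X" using pBC p by (auto simp: normalized_constraints_def supported_in_def split: if_splits)
  moreover have "zero_diag X" using pBC p by (auto simp: normalized_constraints_def zero_diag_def)
  moreover have "off2 n X = 1" using pBC p by (auto simp: normalized_constraints_def)
  moreover have "\<bar>\<phi> k\<bar> \<le> pi / 4" for k
  proof -
    have "\<phi> k \<in> {-(pi/4)..pi/4}" using pBC p by (auto simp: param_box_def PiE_iff)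
    then show ?thesis unfolding abs_le_iff by auto
  qed
  moreover have "cmod (w k) = 1" for k using pBC p by (auto simp: normalized_constraints_def)
  ultimately show "p \<in> normalized_params n" using p by (simp add: normalized_params_def adm_angles_def)
qed

lemma compact_normalized_params: "compact (normalized_params n)"
proof -
  have "compact param_box"
    unfolding param_box_def by (intro compact_Times compact_PiE_UNIV compact_cball compact_Icc)
  moreover have "closed (normalized_constraints n)"
    unfolding normalized_constraints_def
    by (intro closed_Collect_conj closed_Collect_all closed_Collect_eq continuous_on_if_const
        continuous_on_const continuous_on_param_entry continuous_on_off2 continuous_on_norm
        continuous_on_param_phase)
  ultimately show ?thesis using compact_Int_closed normalized_params_eq by simp
qed

text \<open>On the compact set of normalized parameters, the continuous function giving the off-norm
  after \<open>M\<close> steps is \<open>< 1\<close>, hence bounded by some \<open>\<gamma> < 1\<close>.\<close>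

lemma normalized_off2_bound:
  assumes rigid: "rigid n P M" and piv: "pivots_in n P M"
  shows "\<exists>\<gamma>. 0 \<le> \<gamma> \<and> \<gamma> < 1 \<and>
    (\<forall>X \<phi> w. (X, \<phi>, w) \<in> normalized_params n \<longrightarrow> off2 n (jacobi_off P \<phi> w X M) \<le> \<gamma>)"
proof -
  define F where "F = (\<lambda>(X, \<phi>, w). off2 n (jacobi_off P \<phi> w X M))"
  have F_less: "F p < 1" if "p \<in> normalized_params n" for p
  proof -
    obtain X \<phi> w where p: "p = (X, \<phi>, w)" by (cases p)
    then have "supported_in n X" "zero_diag X" "off2 n X = 1" "adm_angles \<phi> w"
      using that by (simp_all add: normalized_params_def)
    then show ?thesis using p off2_jacobi_off_less[OF rigid piv, of X \<phi> w] by (simp add: F_def)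
  qed
  have "continuous_on (normalized_params n) F"
    unfolding F_def split_def
    by (rule continuous_on_subset[OF continuous_on_off2[OF continuous_on_jacobi_off]]) simp
  show ?thesis
  proof (cases "normalized_params n = {}")
    case False
    then obtain p0 where "p0 \<in> normalized_params n" "\<forall>p\<in>normalized_params n. F p \<le> F p0"
      using continuous_attains_sup[OF compact_normalized_params] \<open>continuous_on _ F\<close> by blast
    then have "off2 n (jacobi_off P \<phi> w X M) \<le> F p0" if "(X, \<phi>, w) \<in> normalized_params n" for X \<phi> w
      using that by (metis F_def case_prod_conv)
    moreover have "0 \<le> F p0" by (simp add: F_def split_def off2_nonneg)
    ultimately show ?thesis using F_less \<open>p0 \<in> normalized_params n\<close> by blast
  qed (intro exI[of _ 0], simp)
qed

text \<open>Homogeneity of degree two removes the normalization.\<close>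

lemma rigid_imp_uniform_contraction:
  assumes rigid: "rigid n P M" and piv: "pivots_in n P M"
  shows "\<exists>\<gamma>. 0 \<le> \<gamma> \<and> \<gamma> < 1 \<and> (\<forall>X \<phi> w. supported_in n X \<longrightarrow> zero_diag X \<longrightarrow> adm_angles \<phi> w \<longrightarrow>
     off2 n (jacobi_off P \<phi> w X M) \<le> \<gamma> * off2 n X)"
proof -
  obtain \<gamma> where \<gamma>: "0 \<le> \<gamma>" "\<gamma> < 1"
    and bound: "\<And>X \<phi> w. (X, \<phi>, w) \<in> normalized_params n \<Longrightarrow> off2 n (jacobi_off P \<phi> w X M) \<le> \<gamma>"
    using normalized_off2_bound[OF rigid piv] by blast
  have "off2 n (jacobi_off P \<phi> w X M) \<le> \<gamma> * off2 n X"
    if supp: "supported_in n X" and zdiag: "zero_diag X" and adm: "adm_angles \<phi> w" for X \<phi> w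
  proof (cases "off2 n X = 0")
    case True
    then show ?thesis
      using off2_jacobi_off_antimono[OF piv adm zdiag, of 0] off2_nonneg[of n] by simp
  next
    case False
    then have pos: "off2 n X > 0" using off2_nonneg[of n X] by simp
    define a where "a = complex_of_real (1 / sqrt (off2 n X))"
    have a2: "(cmod a)\<^sup>2 = 1 / off2 n X" using pos by (simp add: a_def norm_divide power_divide)
    have normalized: "((\<lambda>r s. a * X r s), \<phi>, w) \<in> normalized_params n"
      using supp zdiag adm a2 pos by (auto simp: normalized_params_def supported_in_def zero_diag_def off2_scale)
    have "(cmod a)\<^sup>2 * off2 n (jacobi_off P \<phi> w X M) \<le> \<gamma>"
      using bound[OF normalized] by (simp add: jacobi_off_scale off2_scale)
    then show ?thesis using a2 pos by (simp add: divide_le_eq mult.commute)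
  qed
  then show ?thesis using \<gamma> by blast
qed

section \<open>Rigidity of the special cyclic orderings\<close>

definition outer2 :: "(nat \<Rightarrow> complex) \<Rightarrow> (nat \<Rightarrow> complex) \<Rightarrow> (nat \<Rightarrow> complex) \<Rightarrow> cmatrix" where
  "outer2 a e b = (\<lambda>r s. a r * cnj (e s) + e r * cnj (b s))"

definition rot_vec :: "nat \<Rightarrow> nat \<Rightarrow> real \<Rightarrow> complex \<Rightarrow> (nat \<Rightarrow> complex) \<Rightarrow> (nat \<Rightarrow> complex)" where
  "rot_vec i j \<phi> w a = (\<lambda>r. if r = i then of_real (cos \<phi>) * a i + w * of_real (sin \<phi>) * a j
     else if r = j then - (cnj w * of_real (sin \<phi>) * a i) + of_real (cos \<phi>) * a j else a r)"

lemma rot_conj_outer2: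
  assumes "i \<noteq> j"
  shows "rot_conj i j \<phi> w (outer2 a e b) = outer2 (rot_vec i j \<phi> w a) (rot_vec i j \<phi> w e) (rot_vec i j \<phi> w b)"
  using assms by (intro ext) (auto simp: rot_conj_def rot_left_def rot_right_def outer2_def rot_vec_def algebra_simps)

lemma adm_angles_cos_pos:
  assumes "adm_angles \<phi> w" shows "cos (\<phi> k) > 0"
proof -
  have "\<bar>\<phi> k\<bar> \<le> pi / 4" using assms by (simp add: adm_angles_def)
  then show ?thesis using pi_gt_zero by (intro cos_gt_zero_pi) linarith+
qed

text \<open>Sweeping the last column \<open>N\<close> of a matrix \<open>a e\<^sup>* + e b\<^sup>*\<close>, with \<open>e\<close> concentrated at \<open>N\<close>:
  the pivot \<open>(r, N)\<close> equals \<open>a r \<cdot> cnj (e N)\<close> and \<open>e N\<close> stays nonzero because \<open>cos \<phi> \<noteq> 0\<close>, so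
  annihilated pivots force \<open>a r = b r = 0\<close> one row after the other.\<close>

lemma outer2_column_sweep_vanishes:
  assumes "distinct L" "N \<notin> set L" "\<forall>k. cos (\<phi> k) \<noteq> 0"
    "a N = 0" "b N = 0" "e N \<noteq> 0" "\<forall>t\<in>set L. e t = 0"
    "pivots_zero (\<lambda>k. (L ! k, N)) \<phi> w (outer2 a e b) (length L)"
  shows "\<forall>t\<in>set L. a t = 0 \<and> b t = 0"
  using assms
proof (induction L arbitrary: a e b \<phi> w)
  case (Cons r L)
  have rN: "r \<noteq> N" and er: "e r = 0" using Cons.prems(2,7) by auto
  have "outer2 a e b r N = 0" "outer2 a e b N r = 0"
    using Cons.prems(8) unfolding pivots_zero_def by (auto dest: spec[of _ 0])
  then have ar: "a r = 0" and br: "b r = 0" using er Cons.prems(4,6) by (simp_all add: outer2_def)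
  let ?R = "rot_vec r N (\<phi> 0) (w 0)"
  have "rot_seq (\<lambda>k. ((r # L) ! k, N)) \<phi> w (outer2 a e b) 1 = outer2 (?R a) (?R e) (?R b)"
    using rot_conj_outer2[OF rN] by simp
  then have "pivots_zero (\<lambda>k. (L ! k, N)) (\<lambda>k. \<phi> (Suc k)) (\<lambda>k. w (Suc k))
      (outer2 (?R a) (?R e) (?R b)) (length L)"
    using Cons.prems(8) pivots_zero_add[of "\<lambda>k. ((r # L) ! k, N)" \<phi> w "outer2 a e b" 1 "length L"] by simp
  moreover have "?R a N = 0" "?R b N = 0" "?R e N \<noteq> 0" "\<forall>t\<in>set L. ?R e t = 0"
    using rN ar br er Cons.prems by (auto simp: rot_vec_def)
  ultimately have "\<forall>t\<in>set L. ?R a t = 0 \<and> ?R b t = 0"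
    using Cons.IH[of "\<lambda>k. \<phi> (Suc k)" "?R a" "?R b" "?R e" "\<lambda>k. w (Suc k)"] Cons.prems(1-3) by auto
  moreover have "?R a t = a t" "?R b t = b t" if "t \<in> set L" for t
    using that Cons.prems(1,2) by (auto simp: rot_vec_def)
  ultimately show ?case using ar br by simp
qed simp

definition column_sweep :: "(nat \<Rightarrow> nat list) \<Rightarrow> nat \<Rightarrow> (nat \<times> nat) list" where
  "column_sweep L n = concat (map (\<lambda>j. map (\<lambda>i. (i, j)) (L j)) [2..<Suc n])"

lemma rigid_list_Nil:
  assumes "n \<le> 1" shows "rigid_list n []"
  unfolding rigid_list_def rigid_def
proof (intro conjI allI impI ext)
  fix X :: cmatrix and \<phi> w r s assume "supported_in n X" "zero_diag X"
  then show "X r s = 0" using assms by (cases "r = s") (auto simp: supported_in_def zero_diag_def)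
qed simp

text \<open>The sweep acts on the restriction of the matrix to the leading block (its relabelling
  by the identity).\<close>

lemma rot_seq_leading_block_zero:
  assumes rigid: "rigid_list n ps" and zdiag: "zero_diag X" and adm: "adm_angles \<phi> w"
    and zero: "pivots_zero (nth ps) \<phi> w X (length ps)" and rs: "r \<in> {1..n}" "s \<in> {1..n}"
  shows "rot_seq (nth ps) \<phi> w X (length ps) r s = 0"
proof -
  have piv: "pivots_in n (nth ps) k" if "k \<le> length ps" for k
    using rigid that by (intro pivots_in_nth) (auto simp: rigid_list_def)
  have "pivots_zero (nth ps) \<phi> w (relabel (\<lambda>a. a) n X) (length ps)"
    unfolding pivots_zero_def
  proof (intro allI impI)
    fix k assume k: "k < length ps"
    then have "ps ! k \<in> pairs n" using rigid by (auto simp: rigid_list_def)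
    then show "rot_seq (nth ps) \<phi> w (relabel (\<lambda>a. a) n X) k (fst (ps ! k)) (snd (ps ! k)) = 0 \<and>
        rot_seq (nth ps) \<phi> w (relabel (\<lambda>a. a) n X) k (snd (ps ! k)) (fst (ps ! k)) = 0"
      using zero k relabel_id_rot_seq[OF piv[of k], symmetric] by (auto simp: pivots_zero_def relabel_def pairs_def)
  qed
  moreover have "zero_diag (relabel (\<lambda>a. a) n X)" using zdiag by (auto simp: zero_diag_def relabel_def)
  ultimately have "relabel (\<lambda>a. a) n X = (\<lambda>_ _. 0)"
    using rigid adm supported_in_relabel unfolding rigid_list_def rigid_def by blast
  then have Z: "relabel (\<lambda>a. a) n (rot_seq (nth ps) \<phi> w X (length ps)) = (\<lambda>_ _. 0)"
    using relabel_id_rot_seq[OF piv] by simp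
  show ?thesis using fun_cong[OF fun_cong[OF Z, of r], of s] rs by (simp add: relabel_def)
qed

lemma outer2_last_column:
  assumes supp: "supported_in (Suc n) Y" and zdiag: "zero_diag Y"
    and block: "\<And>r s. r \<in> {1..n} \<Longrightarrow> s \<in> {1..n} \<Longrightarrow> Y r s = 0"
  shows "Y = outer2 (\<lambda>t. if t \<in> {1..n} then Y t (Suc n) else 0) (\<lambda>t. if t = Suc n then 1 else 0)
    (\<lambda>t. if t \<in> {1..n} then cnj (Y (Suc n) t) else 0)"
proof (intro ext)
  fix r s
  show "Y r s = outer2 (\<lambda>t. if t \<in> {1..n} then Y t (Suc n) else 0) (\<lambda>t. if t = Suc n then 1 else 0)
    (\<lambda>t. if t \<in> {1..n} then cnj (Y (Suc n) t) else 0) r s"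
  proof (cases "r \<in> {1..Suc n} \<and> s \<in> {1..Suc n}")
    case True
    then have "r \<in> {1..n} \<or> r = Suc n" "s \<in> {1..n} \<or> s = Suc n" by auto
    then show ?thesis using block zdiag by (auto simp: outer2_def zero_diag_def)
  next
    case False
    then show ?thesis using supp by (auto simp: outer2_def supported_in_def)
  qed
qed

lemma rigid_list_append_column:
  assumes rigid: "rigid_list n ps" and L: "distinct L" "set L = {1..n}"
  shows "rigid_list (Suc n) (ps @ map (\<lambda>i. (i, Suc n)) L)"
proof -
  let ?ps = "ps @ map (\<lambda>i. (i, Suc n)) L"
  have set_ps: "set ?ps \<subseteq> pairs (Suc n)"
    using rigid L by (auto simp: rigid_list_def pairs_def)
  have "rigid (Suc n) (nth ?ps) (length ?ps)"
    unfolding rigid_def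
  proof (intro allI impI)
    fix X \<phi> w assume supp: "supported_in (Suc n) X" and zdiag: "zero_diag X" and adm: "adm_angles \<phi> w"
      and zero: "pivots_zero (nth ?ps) \<phi> w X (length ?ps)"
    let ?m = "length ps"
    define Y where "Y = rot_seq (nth ?ps) \<phi> w X ?m"
    have piv: "pivots_in (Suc n) (nth ?ps) ?m" using set_ps by (intro pivots_in_nth) auto
    have zero_ps: "pivots_zero (nth ?ps) \<phi> w X ?m"
      and "pivots_zero (\<lambda>k. ?ps ! (?m + k)) (\<lambda>k. \<phi> (?m + k)) (\<lambda>k. w (?m + k)) Y (length L)"
      using zero pivots_zero_add[of "nth ?ps" \<phi> w X ?m "length L"] by (auto simp: Y_def)
    then have zero_L: "pivots_zero (\<lambda>k. (L ! k, Suc n)) (\<lambda>k. \<phi> (?m + k)) (\<lambda>k. w (?m + k)) Y (length L)"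
      by (subst pivots_zero_cong[of _ _ "\<lambda>k. ?ps ! (?m + k)"]) (auto simp: nth_append)
    have "rot_seq (nth ?ps) \<phi> w X ?m = rot_seq (nth ps) \<phi> w X ?m"
      by (intro rot_seq_cong) (simp add: nth_append)
    moreover have "pivots_zero (nth ps) \<phi> w X ?m"
      using zero_ps by (subst pivots_zero_cong[of _ _ "nth ?ps"]) (auto simp: nth_append)
    ultimately have block: "Y r s = 0" if "r \<in> {1..n}" "s \<in> {1..n}" for r s
      using rot_seq_leading_block_zero[OF rigid zdiag adm _ that] by (simp add: Y_def)
    have suppY: "supported_in (Suc n) Y" using supported_in_rot_seq[OF piv supp] by (simp add: Y_def)
    have zdiagY: "zero_diag Y" using zero_diag_rot_seq[OF piv zdiag zero_ps] by (simp add: Y_def)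
    define a where "a = (\<lambda>t. if t \<in> {1..n} then Y t (Suc n) else 0)"
    define e where "e = (\<lambda>t. if t = Suc n then (1::complex) else 0)"
    define b where "b = (\<lambda>t. if t \<in> {1..n} then cnj (Y (Suc n) t) else 0)"
    have Y: "Y = outer2 a e b"
      using outer2_last_column[OF suppY zdiagY block] by (simp add: a_def e_def b_def)
    have "\<forall>t\<in>set L. a t = 0 \<and> b t = 0"
    proof (rule outer2_column_sweep_vanishes[OF L(1), where \<phi> = "\<lambda>k. \<phi> (?m + k)" and w = "\<lambda>k. w (?m + k)"])
      show "\<forall>k. cos (\<phi> (?m + k)) \<noteq> 0" using adm_angles_cos_pos[OF adm] by (metis less_irrefl)
      show "Suc n \<notin> set L" "\<forall>t\<in>set L. e t = 0" using L by (auto simp: e_def)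
      show "a (Suc n) = 0" "b (Suc n) = 0" "e (Suc n) \<noteq> 0" by (simp_all add: a_def b_def e_def)
      show "pivots_zero (\<lambda>k. (L ! k, Suc n)) (\<lambda>k. \<phi> (?m + k)) (\<lambda>k. w (?m + k)) (outer2 a e b) (length L)"
        using zero_L Y by simp
    qed
    then have "\<forall>t. a t = 0 \<and> b t = 0" using L by (auto simp: a_def b_def)
    then have "Y = (\<lambda>_ _. 0)" using Y by (auto simp: outer2_def)
    then show "X = (\<lambda>_ _. 0)" using rot_seq_eq_zero_imp[OF piv adm] by (simp add: Y_def)
  qed
  then show ?thesis using set_ps by (simp add: rigid_list_def)
qed

lemma rigid_list_column_sweep:
  assumes "\<forall>j\<in>{2..n}. distinct (L j) \<and> set (L j) = {1..<j}"
  shows "rigid_list n (column_sweep L n)"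
  using assms
proof (induction n)
  case (Suc n)
  show ?case
  proof (cases "n = 0")
    case False
    then have "column_sweep L (Suc n) = column_sweep L n @ map (\<lambda>i. (i, Suc n)) (L (Suc n))"
      by (simp add: column_sweep_def)
    moreover have "distinct (L (Suc n))" "set (L (Suc n)) = {1..n}"
      using Suc.prems False by auto
    ultimately show ?thesis using Suc by (simp add: rigid_list_append_column)
  qed (simp add: column_sweep_def rigid_list_Nil)
qed (simp add: column_sweep_def rigid_list_Nil)

lemma C_c_rigid: "Ord \<in> C_c n \<Longrightarrow> rigid_list n Ord"
  unfolding C_c_def using rigid_list_column_sweep by (auto simp: column_sweep_def)

text \<open>Under the relabelling \<open>t \<mapsto> n + 1 - t\<close> a row-cyclic ordering becomes column-cyclic.\<close>

lemma map_reverse_index_upt: "map (\<lambda>j. Suc n - j) [2..<Suc n] = rev [1..<n]"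
proof (rule nth_equalityI)
  show "length (map (\<lambda>j. Suc n - j) [2..<Suc n]) = length (rev [1..<n])" by (simp del: upt_Suc)
next
  fix k assume "k < length (map (\<lambda>j. Suc n - j) [2..<Suc n])"
  then have "k < n - 1" by (simp del: upt_Suc)
  then show "map (\<lambda>j. Suc n - j) [2..<Suc n] ! k = rev [1..<n] ! k"
    by (simp add: rev_nth nth_upt del: upt_Suc)
qed

lemma reverse_index_rows_to_columns:
  assumes L: "\<forall>i\<in>{1..<n}. distinct (L i) \<and> set (L i) = {i<..n}" and j: "j \<in> {2..n}"
  shows "distinct (map (\<lambda>t. Suc n - t) (L (Suc n - j)))"
    "set (map (\<lambda>t. Suc n - t) (L (Suc n - j))) = {1..<j}"
proof -
  have "Suc n - j \<in> {1..<n}" using j by auto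
  then have Lj: "distinct (L (Suc n - j))" "set (L (Suc n - j)) = {Suc n - j<..n}"
    using L by blast+
  have "inj_on (\<lambda>t. Suc n - t) {Suc n - j<..n}" by (auto simp: inj_on_def)
  then show "distinct (map (\<lambda>t. Suc n - t) (L (Suc n - j)))" using Lj by (simp add: distinct_map)
  have "(\<lambda>t. Suc n - t) ` {Suc n - j<..n} = {1..<j}"
  proof
    show "{1..<j} \<subseteq> (\<lambda>t. Suc n - t) ` {Suc n - j<..n}"
    proof
      fix u assume "u \<in> {1..<j}"
      then have "Suc n - u \<in> {Suc n - j<..n}" "u = Suc n - (Suc n - u)" using j by auto
      then show "u \<in> (\<lambda>t. Suc n - t) ` {Suc n - j<..n}" by blast
    qed
  qed (use j in auto)
  then show "set (map (\<lambda>t. Suc n - t) (L (Suc n - j))) = {1..<j}" using Lj by simp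
qed

lemma C_r_rigid:
  assumes "Ord \<in> C_r n" shows "rigid_list n Ord"
proof -
  obtain L where L: "\<forall>i\<in>{1..<n}. distinct (L i) \<and> set (L i) = {i<..n}"
    and Ord: "Ord = concat (map (\<lambda>i. map (\<lambda>j. (i, j)) (L i)) (rev [1..<n]))"
    using assms by (auto simp: C_r_def)
  define q where "q = (\<lambda>t::nat. Suc n - t)"
  have bq: "bij_betw q {1..n} {1..n}"
    by (rule bij_betw_byWitness[where f'=q]) (auto simp: q_def)
  define L' where "L' = (\<lambda>j. map q (L (q j)))"
  have "\<forall>j\<in>{2..n}. distinct (L' j) \<and> set (L' j) = {1..<j}"
    using reverse_index_rows_to_columns[OF L] by (simp add: L'_def q_def)
  then have rigid: "rigid_list n (column_sweep L' n)" by (rule rigid_list_column_sweep)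
  have "map (relabel_pair q) (column_sweep L' n) =
      concat (map (\<lambda>i. map (\<lambda>t. (i, t)) (L i)) (map q [2..<Suc n]))"
    unfolding column_sweep_def map_concat map_map
  proof (intro arg_cong[where f=concat] map_cong refl)
    fix j assume "j \<in> set [2..<Suc n]"
    then have qj: "q j \<in> {1..<n}" by (auto simp: q_def)
    show "(map (relabel_pair q) \<circ> (\<lambda>j. map (\<lambda>i. (i, j)) (L' j))) j = ((\<lambda>i. map (\<lambda>t. (i, t)) (L i)) \<circ> q) j"
      unfolding L'_def comp_def map_map
    proof (intro map_cong refl)
      fix t assume "t \<in> set (L (q j))"
      then have "t \<in> {q j<..n}" using L qj by auto
      then show "relabel_pair q (q t, j) = (q j, t)" using qj by (auto simp: relabel_pair_def q_def)
    qed
  qed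
  also have "\<dots> = Ord" using map_reverse_index_upt Ord by (simp add: q_def)
  finally show ?thesis using rigid_list_relabel[OF rigid bq] by simp
qed

lemma C_sp_rigid: "Ord \<in> C_sp n \<Longrightarrow> rigid_list n Ord"
  unfolding C_sp_def using C_c_rigid C_r_rigid rigid_list_rev by auto

section \<open>Transport of rigidity along equivalences of orderings\<close>

lemma adm_transp_sym: "adm_transp A B \<Longrightarrow> adm_transp B A"
proof -
  assume "adm_transp A B"
  then obtain k where k: "Suc k < length A"
    "{fst (A ! k), snd (A ! k)} \<inter> {fst (A ! Suc k), snd (A ! Suc k)} = {}"
    "B = A[k := A ! Suc k, Suc k := A ! k]" by (auto simp: adm_transp_def)
  have B: "length B = length A" "B ! k = A ! Suc k" "B ! Suc k = A ! k"
    using k by (auto simp: nth_list_update)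
  have "B[k := B ! Suc k, Suc k := B ! k] = A"
    using k B by (auto intro!: nth_equalityI simp: nth_list_update)
  then show "adm_transp B A" unfolding adm_transp_def using k B by (intro exI[of _ k]) auto
qed

lemma adm_transp_set: "adm_transp A B \<Longrightarrow> set B = set A"
  unfolding adm_transp_def by auto

lemma rigid_list_adm_transp:
  assumes rigid: "rigid_list n (xs @ A @ ys)" and t: "adm_transp A B"
  shows "rigid_list n (xs @ B @ ys)"
proof -
  obtain k where k: "Suc k < length A"
    and disj: "{fst (A ! k), snd (A ! k)} \<inter> {fst (A ! Suc k), snd (A ! Suc k)} = {}"
    and B: "B = A[k := A ! Suc k, Suc k := A ! k]" using t by (auto simp: adm_transp_def)
  let ?l = "xs @ A @ ys"
  define p where "p = length xs + k"
  have l_p: "?l ! p = A ! k" "?l ! Suc p = A ! Suc k" using k by (auto simp: p_def nth_append)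
  have "rigid n ((nth ?l)(p := ?l ! Suc p, Suc p := ?l ! p)) (length ?l)"
    using rigid_swap_adjacent[of n "nth ?l" "length ?l" p] rigid k disj l_p
    by (auto simp: rigid_list_def p_def)
  moreover have "((nth ?l)(p := ?l ! Suc p, Suc p := ?l ! p)) i = (xs @ B @ ys) ! i" for i
    using k by (auto simp: B p_def nth_append nth_list_update l_p)
  ultimately have "rigid n (nth (xs @ B @ ys)) (length (xs @ B @ ys))"
    using B by (auto elim: rigid_cong[rotated])
  moreover have "set (xs @ B @ ys) \<subseteq> pairs n"
    using rigid adm_transp_set[OF t] by (auto simp: rigid_list_def)
  ultimately show ?thesis by (simp add: rigid_list_def)
qed

definition rigid_cycles :: "nat \<Rightarrow> nat \<Rightarrow> (nat \<times> nat) list \<Rightarrow> bool" where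
  "rigid_cycles n m Ord \<longleftrightarrow> rigid_list n (concat (replicate m Ord))"

lemma rigid_list_adm_transp_cycles:
  "adm_transp A B \<Longrightarrow> rigid_list n (xs @ concat (replicate m A) @ ys) \<Longrightarrow>
    rigid_list n (xs @ concat (replicate m B) @ ys)"
proof (induction m arbitrary: xs)
  case (Suc m)
  then have "rigid_list n ((xs @ B) @ concat (replicate m A) @ ys)"
    using rigid_list_adm_transp[of n xs A "concat (replicate m A) @ ys" B] by simp
  then show ?case using Suc by fastforce
qed simp

lemma rigid_cycles_ord_equiv: "ord_equiv A B \<Longrightarrow> rigid_cycles n m B \<Longrightarrow> rigid_cycles n m A"
  unfolding ord_equiv_def
proof (induction rule: converse_rtranclp_induct)
  case (step A C)
  then show ?case
    using rigid_list_adm_transp_cycles[OF adm_transp_sym, of A C n "[]" m "[]"] by (simp add: rigid_cycles_def)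
qed

text \<open>A shift costs one extra cycle: \<open>m + 1\<close> cycles of \<open>O\<^sub>1 @ O\<^sub>2\<close> contain \<open>m\<close> cycles of \<open>O\<^sub>2 @ O\<^sub>1\<close>.\<close>

lemma rigid_cycles_shift:
  assumes "shift_equiv A B" "rigid_cycles n m B" "m \<ge> 1"
  shows "rigid_cycles n (Suc m) A"
proof -
  obtain O1 O2 where AB: "A = O1 @ O2" "B = O2 @ O1" using assms(1) by (auto simp: shift_equiv_def)
  have "set (concat (replicate m B)) = set B" using assms(3) by (cases m) auto
  then have "set O1 \<subseteq> pairs n" "set O2 \<subseteq> pairs n"
    using assms(2) AB by (auto simp: rigid_cycles_def rigid_list_def)
  then have "rigid_list n (O1 @ concat (replicate m B) @ O2)"
    using rigid_list_extend assms(2) by (auto simp: rigid_cycles_def)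
  moreover have "concat (replicate (Suc m) A) = O1 @ concat (replicate m B) @ O2"
    unfolding AB by (induction m) simp_all
  ultimately show ?thesis by (simp only: rigid_cycles_def)
qed

lemma rigid_cycles_chain:
  assumes "cs \<noteq> []"
    "\<forall>k. Suc k < length cs \<longrightarrow>
       (if \<tau> k then ord_equiv (cs ! k) (cs ! Suc k) else shift_equiv (cs ! k) (cs ! Suc k))"
    "rigid_cycles n m (last cs)" "m \<ge> 1"
  shows "rigid_cycles n (m + length (filter (\<lambda>k. \<not> \<tau> k) [0..<length cs - 1])) (hd cs)"
  using assms
proof (induction cs arbitrary: \<tau>)
  case (Cons c cs)
  show ?case
  proof (cases "cs = []")
    case False
    have "\<forall>k. Suc k < length cs \<longrightarrow> (if \<tau> (Suc k) then ord_equiv (cs ! k) (cs ! Suc k)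
        else shift_equiv (cs ! k) (cs ! Suc k))"
      using Cons.prems(2) by auto
    then have IH: "rigid_cycles n (m + length (filter (\<lambda>k. \<not> \<tau> (Suc k)) [0..<length cs - 1])) (hd cs)"
      using Cons.IH[OF False] Cons.prems(3,4) False by simp
    have first: "if \<tau> 0 then ord_equiv c (hd cs) else shift_equiv c (hd cs)"
      using Cons.prems(2) False by (auto dest: spec[of _ 0] simp: hd_conv_nth)
    have "[0..<length (c # cs) - 1] = 0 # map Suc [0..<length cs - 1]"
      using False by (simp add: upt_conv_Cons map_Suc_upt)
    then have count: "length (filter (\<lambda>k. \<not> \<tau> k) [0..<length (c # cs) - 1]) =
       (if \<tau> 0 then 0 else 1) + length (filter (\<lambda>k. \<not> \<tau> (Suc k)) [0..<length cs - 1])"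
      by (simp add: filter_map comp_def)
    show ?thesis
      using rigid_cycles_ord_equiv rigid_cycles_shift first IH count Cons.prems(4) by (cases "\<tau> 0") auto
  qed (use Cons.prems in simp)
qed simp

lemma canon_chain_rigid_cycles:
  assumes "canon_chain d A B" "rigid_list n B"
  shows "rigid_cycles n (Suc d) A"
proof -
  obtain cs b where cs: "cs \<noteq> []" "hd cs = A" "last cs = B"
    "\<forall>k. Suc k < length cs \<longrightarrow> (if (even k \<longleftrightarrow> b) then ord_equiv (cs ! k) (cs ! Suc k)
           else shift_equiv (cs ! k) (cs ! Suc k))"
    and d: "d = card {k. Suc k < length cs \<and> \<not> (even k \<longleftrightarrow> b)}"
    using assms(1) unfolding canon_chain_def by blast
  have "{k. Suc k < length cs \<and> \<not> (even k \<longleftrightarrow> b)} = set (filter (\<lambda>k. \<not> (even k \<longleftrightarrow> b)) [0..<length cs - 1])"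
    by auto
  then have "d = length (filter (\<lambda>k. \<not> (even k \<longleftrightarrow> b)) [0..<length cs - 1])"
    unfolding d by (simp only: distinct_card[OF distinct_filter[OF distinct_upt]])
  moreover have "rigid_cycles n 1 B" using assms(2) by (simp add: rigid_cycles_def)
  then have "rigid_cycles n (1 + length (filter (\<lambda>k. \<not> (even k \<longleftrightarrow> b)) [0..<length cs - 1])) (hd cs)"
    by (intro rigid_cycles_chain[where \<tau> = "\<lambda>k. even k \<longleftrightarrow> b"]) (use cs in simp_all)
  ultimately show ?thesis using cs(2) by simp
qed

lemma canon_chain_set_eq:
  assumes "canon_chain d A B" shows "set B = set A"
proof -
  obtain cs b where cs: "cs \<noteq> []" "hd cs = A" "last cs = B"
    and rel: "\<forall>k. Suc k < length cs \<longrightarrow> (if (even k \<longleftrightarrow> b) then ord_equiv (cs ! k) (cs ! Suc k)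
           else shift_equiv (cs ! k) (cs ! Suc k))"
    using assms unfolding canon_chain_def by blast
  have "set (cs ! k) = set A" if "k < length cs" for k
    using that
  proof (induction k)
    case 0 then show ?case using cs by (simp add: hd_conv_nth)
  next
    case (Suc k)
    have "set (cs ! Suc k) = set (cs ! k)"
    proof (cases "even k \<longleftrightarrow> b")
      case True
      then have "adm_transp\<^sup>*\<^sup>* (cs ! k) (cs ! Suc k)"
        using rel[rule_format, OF Suc.prems] by (simp add: ord_equiv_def)
      then show ?thesis by (induction rule: rtranclp_induct) (auto dest: adm_transp_set)
    next
      case False
      then show ?thesis using rel[rule_format, OF Suc.prems] by (auto simp: shift_equiv_def)
    qed
    then show ?case using Suc by simp
  qed
  from this[of "length cs - 1"] show ?thesis using cs by (simp add: last_conv_nth)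
qed

lemma rigid_cycles_perm_equiv:
  assumes "perm_equiv n A B" "rigid_cycles n m B" "set A \<subseteq> pairs n"
  shows "rigid_cycles n m A"
proof -
  obtain q where q: "bij_betw q {1..n} {1..n}" "B = map (\<lambda>(i, j). (min (q i) (q j), max (q i) (q j))) A"
    using assms(1) unfolding perm_equiv_def by blast
  moreover have "(\<lambda>(i, j). (min (q i) (q j), max (q i) (q j))) = relabel_pair q"
    by (auto simp: relabel_pair_def)
  ultimately have "concat (replicate m B) = map (relabel_pair q) (concat (replicate m A))"
    by (simp add: map_concat)
  moreover have "set (concat (replicate m A)) \<subseteq> pairs n" using assms(3) by auto
  ultimately show ?thesis
    using rigid_list_relabel_inverse[OF _ q(1)] assms(2) unfolding rigid_cycles_def by metis
qed

lemma sg_ordering_rigid_cycles: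
  assumes ord: "is_ordering n Ord" and sp: "Ord'' \<in> C_sp n"
    and equiv: "(perm_equiv n Ord Ord' \<and> canon_chain d Ord' Ord'') \<or>
        (canon_chain d Ord Ord' \<and> perm_equiv n Ord' Ord'')"
  shows "rigid_cycles n (Suc d) Ord"
proof -
  have rigid: "rigid_list n Ord''" using C_sp_rigid[OF sp] .
  have set_Ord: "set Ord = pairs n" using ord by (simp add: is_ordering_def)
  from equiv show ?thesis
  proof
    assume "perm_equiv n Ord Ord' \<and> canon_chain d Ord' Ord''"
    then show ?thesis using canon_chain_rigid_cycles[OF _ rigid] rigid_cycles_perm_equiv set_Ord by blast
  next
    assume equiv: "canon_chain d Ord Ord' \<and> perm_equiv n Ord' Ord''"
    then have "set Ord' = pairs n" using canon_chain_set_eq set_Ord by blast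
    then have "rigid_list n Ord'"
      using rigid_cycles_perm_equiv[of n Ord' Ord'' 1] equiv rigid by (simp add: rigid_cycles_def)
    then show ?thesis using canon_chain_rigid_cycles equiv by blast
  qed
qed

lemma nth_concat_replicate:
  "k < m * length xs \<Longrightarrow> concat (replicate m xs) ! k = xs ! (k mod length xs)"
proof (induction m arbitrary: k)
  case (Suc m)
  show ?case
  proof (cases "k < length xs")
    case False
    then have "k - length xs < m * length xs" "(k - length xs) mod length xs = k mod length xs"
      using Suc.prems by (simp_all add: le_mod_geq)
    then show ?thesis using Suc.IH False by (simp add: nth_append)
  qed (simp add: nth_append)
qed simp

lemma rigid_cycles_cyclic:
  assumes "rigid_cycles n m Ord"
  shows "rigid n (\<lambda>k. Ord ! (k mod length Ord)) (m * length Ord)"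
proof -
  have "rigid n (nth (concat (replicate m Ord))) (m * length Ord)"
    using assms by (simp add: rigid_cycles_def rigid_list_def length_concat sum_list_replicate)
  then show ?thesis by (rule rigid_cong[rotated]) (simp add: nth_concat_replicate)
qed

lemma pivots_in_cyclic:
  "set Ord \<subseteq> pairs n \<Longrightarrow> Ord \<noteq> [] \<Longrightarrow> pivots_in n (\<lambda>k. Ord ! (k mod length Ord)) M"
  unfolding pivots_in_def by (metis length_greater_0_conv mod_less_divisor nth_mem subsetD)

lemma ordering_nonempty: "is_ordering n Ord \<Longrightarrow> n \<ge> 2 \<Longrightarrow> Ord \<noteq> []"
  by (auto simp: is_ordering_def pairs_def)

lemma rigid_cycles_contraction:
  assumes ord: "is_ordering n Ord" "n \<ge> 2" and rigid: "rigid_cycles n m Ord"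
  shows "\<exists>\<gamma>. 0 \<le> \<gamma> \<and> \<gamma> < 1 \<and> (\<forall>A Aseq \<phi> \<alpha> m'. m \<le> m' \<longrightarrow> hermitian n A \<longrightarrow>
     jacobi_run n Ord A Aseq \<phi> \<alpha> \<longrightarrow> (\<forall>k. - (pi / 4) \<le> \<phi> k \<and> \<phi> k \<le> pi / 4) \<longrightarrow>
     (offS n (Aseq (m' * length Ord)))\<^sup>2 \<le> \<gamma> * (offS n A)\<^sup>2)"
proof -
  let ?P = "\<lambda>k. Ord ! (k mod length Ord)"
  have set_Ord: "set Ord \<subseteq> pairs n" and ne: "Ord \<noteq> []"
    using ord ordering_nonempty by (auto simp: is_ordering_def)
  note piv = pivots_in_cyclic[OF set_Ord ne]
  obtain \<gamma> where \<gamma>: "0 \<le> \<gamma>" "\<gamma> < 1" and bound: "\<And>X \<phi> w. supported_in n X \<Longrightarrow> zero_diag X \<Longrightarrow>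
      adm_angles \<phi> w \<Longrightarrow> off2 n (jacobi_off ?P \<phi> w X (m * length Ord)) \<le> \<gamma> * off2 n X"
    using rigid_imp_uniform_contraction[OF rigid_cycles_cyclic[OF rigid] piv] by blast
  have "(offS n (Aseq (m' * length Ord)))\<^sup>2 \<le> \<gamma> * (offS n A)\<^sup>2"
    if "m \<le> m'" "hermitian n A" "jacobi_run n Ord A Aseq \<phi> \<alpha>" "\<forall>k. - (pi / 4) \<le> \<phi> k \<and> \<phi> k \<le> pi / 4"
    for A Aseq \<phi> \<alpha> m'
  proof -
    define w where "w = (\<lambda>k. exp (\<i> * complex_of_real (\<alpha> k)))"
    have "\<bar>\<phi> k\<bar> \<le> pi / 4" for k
      using that(4)[rule_format, of k] unfolding abs_le_iff by linarith
    then have adm: "adm_angles \<phi> w" by (simp add: adm_angles_def w_def)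
    have "(offS n (Aseq (m' * length Ord)))\<^sup>2 = off2 n (off_part n (Aseq (m' * length Ord)))"
      by (simp add: off2_off_part)
    also have "\<dots> = off2 n (jacobi_off ?P \<phi> w (off_part n A) (m' * length Ord))"
      using off_part_jacobi_run[OF that(3,2) set_Ord ne] by (simp add: w_def)
    also have "\<dots> \<le> off2 n (jacobi_off ?P \<phi> w (off_part n A) (m * length Ord))"
      using that(1) by (intro off2_jacobi_off_antimono[OF piv adm zero_diag_off_part]) simp
    also have "\<dots> \<le> \<gamma> * (offS n A)\<^sup>2"
      using bound[OF supported_in_off_part zero_diag_off_part adm] by (simp add: off2_off_part)
    finally show ?thesis .
  qed
  then show ?thesis using \<gamma> by blast
qed

lemma sg_ordering_contraction:
  assumes "is_ordering n Ord" "n \<ge> 2"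
  shows "\<exists>\<gamma>. 0 \<le> \<gamma> \<and> \<gamma> < 1 \<and> (\<forall>A Ord' Ord'' d Aseq \<phi> \<alpha>. Ord'' \<in> C_sp n \<longrightarrow>
       ((perm_equiv n Ord Ord' \<and> canon_chain d Ord' Ord'') \<or>
        (canon_chain d Ord Ord' \<and> perm_equiv n Ord' Ord'')) \<longrightarrow>
       hermitian n A \<longrightarrow> jacobi_run n Ord A Aseq \<phi> \<alpha> \<longrightarrow>
       (\<forall>k. - (pi / 4) \<le> \<phi> k \<and> \<phi> k \<le> pi / 4) \<longrightarrow>
       (offS n (Aseq ((d + 1) * length Ord)))\<^sup>2 \<le> \<gamma> * (offS n A)\<^sup>2)"
proof -
  let ?Q = "\<lambda>Ord' Ord'' d. Ord'' \<in> C_sp n \<and> ((perm_equiv n Ord Ord' \<and> canon_chain d Ord' Ord'') \<or>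
      (canon_chain d Ord Ord' \<and> perm_equiv n Ord' Ord''))"
  show ?thesis
  proof (cases "\<exists>Ord' Ord'' d. ?Q Ord' Ord'' d")
    case True
    define d0 where "d0 = (LEAST d. \<exists>Ord' Ord''. ?Q Ord' Ord'' d)"
    have "\<exists>d Ord' Ord''. ?Q Ord' Ord'' d" using True by blast
    then have "\<exists>Ord' Ord''. ?Q Ord' Ord'' d0" unfolding d0_def by (rule LeastI_ex)
    then have "rigid_cycles n (Suc d0) Ord" using sg_ordering_rigid_cycles[OF assms(1)] by blast
    moreover have "Suc d0 \<le> d + 1" if "?Q Ord' Ord'' d" for Ord' Ord'' d
      using that Least_le[of "\<lambda>d. \<exists>Ord' Ord''. ?Q Ord' Ord'' d" d] by (auto simp: d0_def)
    ultimately show ?thesis using rigid_cycles_contraction[OF assms] by meson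
  qed (intro exI[of _ 0], auto)
qed

lemma finite_uniform_contraction:
  assumes "finite S" "\<forall>x\<in>S. \<exists>\<gamma>::real. 0 \<le> \<gamma> \<and> \<gamma> < 1 \<and> P x \<gamma>"
    and mono: "\<And>x \<gamma> \<gamma>'. P x \<gamma> \<Longrightarrow> \<gamma> \<le> \<gamma>' \<Longrightarrow> P x \<gamma>'"
  shows "\<exists>\<gamma>. 0 \<le> \<gamma> \<and> \<gamma> < 1 \<and> (\<forall>x\<in>S. P x \<gamma>)"
  using assms(1,2)
proof (induction S rule: finite_induct)
  case (insert x S)
  then obtain \<gamma>1 \<gamma>2 where "0 \<le> \<gamma>1" "\<gamma>1 < 1" "\<forall>y\<in>S. P y \<gamma>1" "0 \<le> \<gamma>2" "\<gamma>2 < 1" "P x \<gamma>2"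
    by auto
  then show ?case using mono by (intro exI[of _ "max \<gamma>1 \<gamma>2"]) auto
qed auto

lemma finite_orderings: "finite {Ord. is_ordering n Ord}"
proof -
  have "finite (pairs n)" by (rule finite_subset[of _ "{1..n} \<times> {1..n}"]) (auto simp: pairs_def)
  show ?thesis
    by (rule finite_subset[OF _ finite_subset_distinct[OF \<open>finite (pairs n)\<close>]]) (auto simp: is_ordering_def)
qed

theorem corollary3p7:
  fixes n :: nat
  assumes "n \<ge> 2"
  shows "\<exists>\<gamma>::real. 0 \<le> \<gamma> \<and> \<gamma> < 1 \<and>
    (\<forall>(A::cmatrix) Ord Ord' Ord'' (d::nat) Aseq \<phi> \<alpha>.
       hermitian n A \<longrightarrow> is_ordering n Ord \<longrightarrow> Ord'' \<in> C_sp n \<longrightarrow>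
       ((perm_equiv n Ord Ord' \<and> canon_chain d Ord' Ord'') \<or>
        (canon_chain d Ord Ord' \<and> perm_equiv n Ord' Ord'')) \<longrightarrow>
       jacobi_run n Ord A Aseq \<phi> \<alpha> \<longrightarrow>
       (\<forall>k. - (pi / 4) \<le> \<phi> k \<and> \<phi> k \<le> pi / 4) \<longrightarrow>
       (offS n (Aseq ((d + 1) * length Ord)))\<^sup>2 \<le> \<gamma> * (offS n A)\<^sup>2)"
proof -
  have "\<exists>\<gamma>. 0 \<le> \<gamma> \<and> \<gamma> < 1 \<and> (\<forall>Ord\<in>{Ord. is_ordering n Ord}. \<forall>A Ord' Ord'' d Aseq \<phi> \<alpha>.
       Ord'' \<in> C_sp n \<longrightarrow>
       ((perm_equiv n Ord Ord' \<and> canon_chain d Ord' Ord'') \<or>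
        (canon_chain d Ord Ord' \<and> perm_equiv n Ord' Ord'')) \<longrightarrow>
       hermitian n A \<longrightarrow> jacobi_run n Ord A Aseq \<phi> \<alpha> \<longrightarrow>
       (\<forall>k. - (pi / 4) \<le> \<phi> k \<and> \<phi> k \<le> pi / 4) \<longrightarrow>
       (offS n (Aseq ((d + 1) * length Ord)))\<^sup>2 \<le> \<gamma> * (offS n A)\<^sup>2)"
  proof (rule finite_uniform_contraction[OF finite_orderings], goal_cases)
    case 1
    show ?case using sg_ordering_contraction assms by blast
  next
    case 2
    then show ?case by (meson mult_right_mono order_trans zero_le_power2)
  qed
  then show ?thesis by blast
qed

end
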